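(* With the notation below, for $1\le i\le r$ let $W_{p_i} = \eta_M(W) \cap \mathrm{GL}(e_i,p_i)$. Then: (a) $\eta_M(W) = W_{p_1}\times\cdots\times W_{p_r}$; (b) $W_{p_i} = \mathrm{Stab}_{C_{p_i}}([\epsilon_{p_i}])$ for $1 \le i \le r$.
   Context: Let $G$ be a finite group of $F$-class $\ge 1$ whose $F$-rank (the order $|\nu_0(G)/\nu_1(G)|$, where $\nu_0(G)=F(G)$ is the Fitting subgroup and $\nu_1(G)=\Phi(F(G))$) has prime divisors $p_1,\dots,p_r$, and $k=p_1\cdots p_r$. With $F$ free on $f_1,\dots,f_n$, $\mu:F\to G$ an epimorphism, $R=\ker\mu$, $L=\mu^{-1}(F(G))$, put $G^*=F/[R,L]R^k$ and $M=R/[R,L]R^k$, an abelian normal subgroup of $G^*$ with $G^*/M=G$. Then $M=M_{p_1}\times\cdots\times M_{p_r}$ with $M_{p_i}$ its Sylow $p_i$-subgroup, elementary abelian of rank $e_i$, so $\mathrm{Aut}(M)=\mathrm{GL}(e_1,p_1)\times\cdots\times\mathrm{GL}(e_r,p_r)$. $\mathrm{Aut}_M(G^* )$ is the group of automorphisms of $G^*$ leaving $M$ invariant; $\eta_G$ maps $\alpha$ to the induced automorphism of $G^*/M=G$, $\eta_M$ maps $\alpha$ to $\alpha|_M$, and $W=\ker\eta_G$. $G$ acts on $M$ via conjugation in $G^*$; $C_{p_i}$ is the centralizer in $\mathrm{Aut}(M_{p_i})=\mathrm{GL}(e_i,p_i)$ of the induced action of $G$ on $M_{p_i}$. Let $\epsilon\in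 Z^2(G,M)$ define $G^*$ as extension of $M$ by $G$ and write $\epsilon=\epsilon_{p_1}+\cdots+\epsilon_{p_r}$ with $\epsilon_{p_i}\in Z^2(G,M_{p_i})$ (using $Z^2(G,M)=\bigoplus_i Z^2(G,M_{p_i})$), and $[\epsilon_{p_i}]=\epsilon_{p_i}+B^2(G,M_{p_i})$. $C_{p_i}$ acts on $H^2(G,M_{p_i})$ via $c([\delta])=[c\circ\delta]$. *)

theory Defs
  imports "HOL-Algebra.Generated_Groups" "HOL-Algebra.FiniteProduct"
          "HOL-Computational_Algebra.Primes"
begin

text \<open>A word is a list of letters (i, b): generator i, with exponent +1 if b, -1 otherwise.\<close>

definition word_eval :: "('a, 'm) monoid_scheme \<Rightarrow> (nat \<Rightarrow> 'a) \<Rightarrow> (nat \<times> bool) list \<Rightarrow> 'a" where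
  "word_eval F g ws =
     foldr (\<lambda>(i, b) acc. (if b then g i else inv\<^bsub>F\<^esub> (g i)) \<otimes>\<^bsub>F\<^esub> acc) ws \<one>\<^bsub>F\<^esub>"

definition reduced_word :: "(nat \<times> bool) list \<Rightarrow> bool" where
  "reduced_word ws = (\<forall>j. Suc j < length ws \<longrightarrow>
      \<not> (fst (ws ! j) = fst (ws ! Suc j) \<and> snd (ws ! j) \<noteq> snd (ws ! Suc j)))"

definition free_on :: "('a, 'm) monoid_scheme \<Rightarrow> (nat \<Rightarrow> 'a) \<Rightarrow> nat \<Rightarrow> bool" where
  "free_on F g n = (group F \<and> g ` {..<n} \<subseteq> carrier F \<and> inj_on g {..<n}
      \<and> generate F (g ` {..<n}) = carrier F
      \<and> (\<forall>ws. ws \<noteq> [] \<and> fst ` set ws \<subseteq> {..<n} \<and> reduced_word ws \<longrightarrow> word_eval F g ws \<noteq> \<one>\<^bsub>F\<^esub>))"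

definition comm_sub :: "('a, 'm) monoid_scheme \<Rightarrow> 'a set \<Rightarrow> 'a set \<Rightarrow> 'a set" where
  "comm_sub G H K = generate G
     {inv\<^bsub>G\<^esub> h \<otimes>\<^bsub>G\<^esub> inv\<^bsub>G\<^esub> k \<otimes>\<^bsub>G\<^esub> h \<otimes>\<^bsub>G\<^esub> k | h k. h \<in> H \<and> k \<in> K}"

fun lower_central :: "('a, 'm) monoid_scheme \<Rightarrow> nat \<Rightarrow> 'a set" where
  "lower_central G 0 = carrier G"
| "lower_central G (Suc i) = comm_sub G (lower_central G i) (carrier G)"

definition nilpotent_group :: "('a, 'm) monoid_scheme \<Rightarrow> bool" where
  "nilpotent_group G = (group G \<and> (\<exists>i. lower_central G i = {\<one>\<^bsub>G\<^esub>}))"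

definition fitting :: "('a, 'm) monoid_scheme \<Rightarrow> 'a set" where
  "fitting G = generate G (\<Union>{N. N \<lhd> G \<and> nilpotent_group (G\<lparr>carrier := N\<rparr>)})"

definition maximal_subgroup :: "'a set \<Rightarrow> ('a, 'm) monoid_scheme \<Rightarrow> bool" where
  "maximal_subgroup K G = (subgroup K G \<and> K \<noteq> carrier G \<and>
      (\<forall>J. subgroup J G \<and> K \<subseteq> J \<longrightarrow> J = K \<or> J = carrier G))"

definition frattini :: "('a, 'm) monoid_scheme \<Rightarrow> 'a set" where
  "frattini G = \<Inter>(insert (carrier G) {K. maximal_subgroup K G})"

text \<open>F-rank |nu_0(G)/nu_1(G)| = |F(G) / Phi(F(G))|, its prime divisors, and k.\<close>
definition F_rank :: "('a, 'm) monoid_scheme \<Rightarrow> nat" where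
  "F_rank G = card (fitting G) div card (frattini (G\<lparr>carrier := fitting G\<rparr>))"

definition F_primes :: "('a, 'm) monoid_scheme \<Rightarrow> nat set" where
  "F_primes G = {p. prime p \<and> p dvd F_rank G}"

definition k_of :: "('a, 'm) monoid_scheme \<Rightarrow> nat" where
  "k_of G = \<Prod>(F_primes G)"

section \<open>The construction G* = F/[R,L]R^k, M = R/[R,L]R^k\<close>

definition Rsub :: "('f, 'm) monoid_scheme \<Rightarrow> ('g, 'n) monoid_scheme \<Rightarrow> ('f \<Rightarrow> 'g) \<Rightarrow> 'f set" where
  "Rsub F G mu = kernel F G mu"

definition Lsub :: "('f, 'm) monoid_scheme \<Rightarrow> ('g, 'n) monoid_scheme \<Rightarrow> ('f \<Rightarrow> 'g) \<Rightarrow> 'f set" where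
  "Lsub F G mu = {x \<in> carrier F. mu x \<in> fitting G}"

definition Nsub :: "('f, 'm) monoid_scheme \<Rightarrow> ('g, 'n) monoid_scheme \<Rightarrow> ('f \<Rightarrow> 'g) \<Rightarrow> 'f set" where
  "Nsub F G mu = comm_sub F (Rsub F G mu) (Lsub F G mu) <#>\<^bsub>F\<^esub>
                 generate F {x [^]\<^bsub>F\<^esub> k_of G | x. x \<in> Rsub F G mu}"

definition Gstar :: "('f, 'm) monoid_scheme \<Rightarrow> ('g, 'n) monoid_scheme \<Rightarrow> ('f \<Rightarrow> 'g) \<Rightarrow> 'f set monoid" where
  "Gstar F G mu = F Mod (Nsub F G mu)"

definition Mset :: "('f, 'm) monoid_scheme \<Rightarrow> ('g, 'n) monoid_scheme \<Rightarrow> ('f \<Rightarrow> 'g) \<Rightarrow> 'f set set" where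
  "Mset F G mu = (\<lambda>x. Nsub F G mu #>\<^bsub>F\<^esub> x) ` Rsub F G mu"

definition Mgrp :: "('f, 'm) monoid_scheme \<Rightarrow> ('g, 'n) monoid_scheme \<Rightarrow> ('f \<Rightarrow> 'g) \<Rightarrow> 'f set monoid" where
  "Mgrp F G mu = (Gstar F G mu)\<lparr>carrier := Mset F G mu\<rparr>"

text \<open>M_p: the Sylow p-subgroup of the finite abelian group M, i.e. its p-elements.\<close>
definition Msyl :: "('f, 'm) monoid_scheme \<Rightarrow> ('g, 'n) monoid_scheme \<Rightarrow> ('f \<Rightarrow> 'g) \<Rightarrow> nat \<Rightarrow> 'f set set" where
  "Msyl F G mu p = {m \<in> Mset F G mu. \<exists>e::nat. m [^]\<^bsub>Gstar F G mu\<^esub> (p ^ e) = \<one>\<^bsub>Gstar F G mu\<^esub>}"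

text \<open>Action of G on M by conjugation in G*: g acts via any preimage of g in G*.\<close>
definition gact :: "('f, 'm) monoid_scheme \<Rightarrow> ('g, 'n) monoid_scheme \<Rightarrow> ('f \<Rightarrow> 'g) \<Rightarrow> 'g \<Rightarrow> 'f set \<Rightarrow> 'f set" where
  "gact F G mu g m =
     (let x = Nsub F G mu #>\<^bsub>F\<^esub> (SOME w. w \<in> carrier F \<and> mu w = g)
      in x \<otimes>\<^bsub>Gstar F G mu\<^esub> m \<otimes>\<^bsub>Gstar F G mu\<^esub> inv\<^bsub>Gstar F G mu\<^esub> x)"

text \<open>eps is a 2-cocycle defining G* as an extension of M by G (w.r.t. G*/M = G via mu):
  eps(g,h) = s(g) s(h) s(gh)^{-1} for a section s of G* -> G.\<close>
definition defines_extension :: "('f, 'm) monoid_scheme \<Rightarrow> ('g, 'n) monoid_scheme \<Rightarrow> ('f \<Rightarrow> 'g)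
    \<Rightarrow> ('g \<Rightarrow> 'g \<Rightarrow> 'f set) \<Rightarrow> bool" where
  "defines_extension F G mu eps = (\<exists>s.
      (\<forall>g \<in> carrier G. \<exists>w \<in> carrier F. mu w = g \<and> s g = Nsub F G mu #>\<^bsub>F\<^esub> w) \<and>
      (\<forall>g \<in> carrier G. \<forall>h \<in> carrier G.
          eps g h = s g \<otimes>\<^bsub>Gstar F G mu\<^esub> s h \<otimes>\<^bsub>Gstar F G mu\<^esub> inv\<^bsub>Gstar F G mu\<^esub> (s (g \<otimes>\<^bsub>G\<^esub> h))))"

text \<open>[d] = [d'] in H^2(G, M_p): d and d' differ by a coboundary (written multiplicatively).\<close>
definition cohomologous :: "('f, 'm) monoid_scheme \<Rightarrow> ('g, 'n) monoid_scheme \<Rightarrow> ('f \<Rightarrow> 'g) \<Rightarrow> nat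
    \<Rightarrow> ('g \<Rightarrow> 'g \<Rightarrow> 'f set) \<Rightarrow> ('g \<Rightarrow> 'g \<Rightarrow> 'f set) \<Rightarrow> bool" where
  "cohomologous F G mu p d d' = (\<exists>phi.
      (\<forall>g \<in> carrier G. phi g \<in> Msyl F G mu p) \<and>
      (\<forall>g \<in> carrier G. \<forall>h \<in> carrier G.
          d g h = d' g h \<otimes>\<^bsub>Gstar F G mu\<^esub> gact F G mu g (phi h)
                  \<otimes>\<^bsub>Gstar F G mu\<^esub> inv\<^bsub>Gstar F G mu\<^esub> (phi (g \<otimes>\<^bsub>G\<^esub> h))
                  \<otimes>\<^bsub>Gstar F G mu\<^esub> phi g))"

definition Aut :: "('a, 'm) monoid_scheme \<Rightarrow> ('a \<Rightarrow> 'a) set" where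
  "Aut A = iso A A \<inter> extensional (carrier A)"

text \<open>C_p: centraliser in Aut(M_p) = GL(e,p) of the action of G on M_p.\<close>
definition Cp :: "('f, 'm) monoid_scheme \<Rightarrow> ('g, 'n) monoid_scheme \<Rightarrow> ('f \<Rightarrow> 'g) \<Rightarrow> nat \<Rightarrow> ('f set \<Rightarrow> 'f set) set" where
  "Cp F G mu p = {c \<in> Aut ((Gstar F G mu)\<lparr>carrier := Msyl F G mu p\<rparr>).
      \<forall>g \<in> carrier G. \<forall>m \<in> Msyl F G mu p. c (gact F G mu g m) = gact F G mu g (c m)}"

text \<open>Aut_M(G*), W = ker eta_G, eta_M(W), and W_p = eta_M(W) \<inter> GL(e,p), where GL(e,p) sits
  inside Aut(M) = prod GL(e_i,p_i) as the automorphisms fixing every other M_q pointwise.\<close>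
definition AutM_Gstar :: "('f, 'm) monoid_scheme \<Rightarrow> ('g, 'n) monoid_scheme \<Rightarrow> ('f \<Rightarrow> 'g) \<Rightarrow> ('f set \<Rightarrow> 'f set) set" where
  "AutM_Gstar F G mu = {a \<in> iso (Gstar F G mu) (Gstar F G mu). a ` Mset F G mu = Mset F G mu}"

definition Wker :: "('f, 'm) monoid_scheme \<Rightarrow> ('g, 'n) monoid_scheme \<Rightarrow> ('f \<Rightarrow> 'g) \<Rightarrow> ('f set \<Rightarrow> 'f set) set" where
  "Wker F G mu = {a \<in> AutM_Gstar F G mu. \<forall>x \<in> carrier (Gstar F G mu).
      Mset F G mu #>\<^bsub>Gstar F G mu\<^esub> a x = Mset F G mu #>\<^bsub>Gstar F G mu\<^esub> x}"

definition etaM_W :: "('f, 'm) monoid_scheme \<Rightarrow> ('g, 'n) monoid_scheme \<Rightarrow> ('f \<Rightarrow> 'g) \<Rightarrow> ('f set \<Rightarrow> 'f set) set" where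
  "etaM_W F G mu = (\<lambda>a. restrict a (Mset F G mu)) ` Wker F G mu"

definition Wp :: "('f, 'm) monoid_scheme \<Rightarrow> ('g, 'n) monoid_scheme \<Rightarrow> ('f \<Rightarrow> 'g) \<Rightarrow> nat \<Rightarrow> ('f set \<Rightarrow> 'f set) set" where
  "Wp F G mu p = {b \<in> etaM_W F G mu. \<forall>q \<in> F_primes G. q \<noteq> p \<longrightarrow> (\<forall>m \<in> Msyl F G mu q. b m = m)}"

end

theory Submission
  imports Defs "HOL-Algebra.SndIsomorphismGrp" "HOL-Algebra.Multiplicative_Group"
begin

text \<open>
  As \<open>k\<close> is squarefree, \<open>M\<close> is the direct product of its primary parts \<open>M\<^sub>p\<close>, and the
  projection onto \<open>M\<^sub>p\<close> is a power map \<open>m \<mapsto> m\<^bsup>e\<^sub>p\<^esup>\<close>, so it commutes with every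
  homomorphism and with the action of \<open>G\<close>.

  Fix a section \<open>s\<close> of \<open>G* \<rightarrow> G\<close>, so that \<open>eps(g,h) = s(g) s(h) s(gh)\<^sup>-\<^sup>1\<close> and every
  element of \<open>G*\<close> is uniquely \<open>m s(g)\<close>. An automorphism \<open>a \<in> W\<close> gives \<open>\<psi>(g) = a(s g) s(g)\<^sup>-\<^sup>1 \<in> M\<close>
  with \<open>a \<circ> eps = eps \<cdot> \<delta>\<psi>\<close>; conversely a \<open>G\<close>-equivariant automorphism \<open>\<alpha>\<close> of \<open>M\<close> with
  \<open>\<alpha> \<circ> eps = eps \<cdot> \<delta>\<psi>\<close> extends to the element \<open>m s(g) \<mapsto> \<alpha>(m) \<psi>(g) s(g)\<close> of \<open>W\<close>.
  Projecting onto \<open>M\<^sub>p\<close> shows that \<open>\<eta>\<^sub>M(W)\<close> restricts into \<open>Stab([eps\<^sub>p])\<close>; conversely an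
  element of \<open>Stab([eps\<^sub>p])\<close>, extended by the identity on the other \<open>M\<^sub>q\<close>, satisfies the
  extension criterion, which gives (b). Since \<open>\<eta>\<^sub>M(W)\<close> is closed under composition, an
  automorphism of \<open>M\<close> agreeing on each \<open>M\<^sub>p\<close> with an element of \<open>W\<^sub>p\<close> is the product of these
  elements, which gives (a).
\<close>

lemma prod_distinct_primes_dvd:
  fixes P :: "nat set"
  assumes "finite P" "\<And>p. p \<in> P \<Longrightarrow> prime p" "\<And>p. p \<in> P \<Longrightarrow> p dvd n"
  shows "\<Prod>P dvd n"
  using assms
proof (induction P rule: finite_induct)
  case (insert p P)
  have "\<not> p dvd \<Prod>P"
  proof
    assume "p dvd \<Prod>P"
    then obtain q where "q \<in> P" "p dvd q"
      using prime_dvd_prod_iff[of P p "\<lambda>x. x"] insert by auto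
    then show False
      using insert by (metis insertCI primes_dvd_imp_eq)
  qed
  then have "coprime p (\<Prod>P)"
    using insert by (simp add: prime_imp_coprime)
  then show ?case
    using insert by (simp add: divides_mult)
qed simp

lemma prime_not_dvd_prod_others:
  fixes P :: "nat set"
  assumes "finite P" "\<And>q. q \<in> P \<Longrightarrow> prime q" "p \<in> P"
  shows "\<not> p dvd \<Prod>(P - {p})"
proof
  assume "p dvd \<Prod>(P - {p})"
  then obtain q where "q \<in> P - {p}" "p dvd q"
    using prime_dvd_prod_iff[of "P - {p}" p "\<lambda>x. x"] assms by auto
  then show False
    using assms by (metis DiffE insertCI primes_dvd_imp_eq)
qed

text \<open>The exponents of the Chinese remainder idempotents of \<open>\<int>/(\<Prod>P)\<close>.\<close>

lemma exists_idempotent_exponent: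
  fixes P :: "nat set"
  assumes "finite P" "\<And>q. q \<in> P \<Longrightarrow> prime q" "p \<in> P"
  shows "\<exists>e. e mod p = 1 \<and> (\<forall>q\<in>P. q \<noteq> p \<longrightarrow> q dvd e)"
proof -
  let ?K = "\<Prod>(P - {p})"
  have "coprime ?K p"
    using prime_not_dvd_prod_others[OF assms] assms
    by (metis prime_imp_coprime coprime_commute)
  moreover have "?K \<noteq> 0"
    using assms by (metis DiffD1 finite_Diff not_prime_0 prod_zero_iff)
  ultimately obtain u y where uy: "?K * u = p * y + 1"
    using bezout_nat[of ?K p] by auto
  show ?thesis
  proof (intro exI conjI ballI impI)
    show "?K * u mod p = 1"
      using uy prime_gt_1_nat[OF assms(2)[OF assms(3)]] by (simp add: mod_Suc)
    show "q dvd ?K * u" if "q \<in> P" "q \<noteq> p" for q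
      using that assms by (intro dvd_mult2 dvd_prodI) auto
  qed
qed

lemma (in group) inv_mult_cancel [simp]: "x \<in> carrier G \<Longrightarrow> y \<in> carrier G \<Longrightarrow> inv x \<otimes> (x \<otimes> y) = y"
  by (simp add: m_assoc[symmetric])

lemma (in group) mult_inv_cancel [simp]: "x \<in> carrier G \<Longrightarrow> y \<in> carrier G \<Longrightarrow> x \<otimes> (inv x \<otimes> y) = y"
  by (simp add: m_assoc[symmetric])

lemma (in group) rcos_eq_iff:
  assumes "subgroup K G" "x \<in> carrier G" "y \<in> carrier G"
  shows "K #> x = K #> y \<longleftrightarrow> x \<otimes> inv y \<in> K"
proof
  assume "K #> x = K #> y"
  then show "x \<otimes> inv y \<in> K"
    using subgroup.rcos_module_imp[OF assms(1) is_group assms(3)] rcos_self[OF assms(2,1)] by simp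
next
  assume "x \<otimes> inv y \<in> K"
  then have "x \<in> K #> y"
    using subgroup.rcos_module_rev[OF assms(1) is_group assms(3,2)] by simp
  then show "K #> x = K #> y"
    using repr_independence[OF _ assms(3,1)] by simp
qed

lemma hom_finprod:
  assumes "comm_group A" "comm_group B" "h \<in> hom A B" "finite I" "f \<in> I \<rightarrow> carrier A"
  shows "h (finprod A f I) = finprod B (\<lambda>i. h (f i)) I"
proof -
  interpret A: comm_group A by (fact assms(1))
  interpret B: comm_group B by (fact assms(2))
  show ?thesis
    using assms(4,5)
  proof (induction I rule: finite_induct)
    case empty
    then show ?case
      using hom_one[OF assms(3) A.is_group B.is_group] by simp
  next
    case (insert i I)
    have "f i \<in> carrier A" "f \<in> I \<rightarrow> carrier A"
      using insert.prems by auto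
    moreover have "(\<lambda>i. h (f i)) \<in> insert i I \<rightarrow> carrier B"
      using insert.prems hom_in_carrier[OF assms(3)] by auto
    ultimately show ?case
      using insert hom_mult[OF assms(3)] by (simp add: A.finprod_closed)
  qed
qed

section \<open>Primary decomposition of an abelian group of squarefree exponent\<close>

locale squarefree_exponent_subgroup = group H
  for H :: "'a monoid" (structure) +
  fixes M :: "'a set" and P :: "nat set"
  assumes M_subgroup: "subgroup M H"
    and M_comm: "\<And>x y. x \<in> M \<Longrightarrow> y \<in> M \<Longrightarrow> x \<otimes> y = y \<otimes> x"
    and finite_P: "finite P"
    and prime_P: "\<And>p. p \<in> P \<Longrightarrow> prime p"
    and M_exponent: "\<And>m. m \<in> M \<Longrightarrow> m [^] \<Prod>P = \<one>"
begin

abbreviation M_group :: "'a monoid" where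
  "M_group \<equiv> H\<lparr>carrier := M\<rparr>"

lemma M_carrier: "m \<in> M \<Longrightarrow> m \<in> carrier H"
  using subgroup.mem_carrier[OF M_subgroup] .

lemma M_one [simp]: "\<one> \<in> M"
  using subgroup.one_closed[OF M_subgroup] .

lemma M_mult [simp]: "x \<in> M \<Longrightarrow> y \<in> M \<Longrightarrow> x \<otimes> y \<in> M"
  using subgroup.m_closed[OF M_subgroup] .

lemma M_inv [simp]: "x \<in> M \<Longrightarrow> inv x \<in> M"
  using subgroup.m_inv_closed[OF M_subgroup] .

lemma M_pow [simp]: "m \<in> M \<Longrightarrow> m [^] (n::nat) \<in> M"
  by (induction n) auto

lemma M_lcomm: "x \<in> M \<Longrightarrow> y \<in> M \<Longrightarrow> z \<in> carrier H \<Longrightarrow> x \<otimes> (y \<otimes> z) = y \<otimes> (x \<otimes> z)"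
  using M_comm[of x y] M_carrier by (simp add: m_assoc[symmetric])

lemmas M_ac = m_assoc M_comm M_lcomm M_carrier

lemma M_conj: "x \<in> M \<Longrightarrow> y \<in> M \<Longrightarrow> x \<otimes> y \<otimes> inv x = y"
  using M_comm[of x y] M_carrier by (simp add: m_assoc)

sublocale M_group: comm_group M_group
  using group.group_comm_groupI[OF subgroup_imp_group[OF M_subgroup]] M_comm by simp

lemma pow_eq_one_if_dvd: "m \<in> M \<Longrightarrow> \<Prod>P dvd j \<Longrightarrow> m [^] (j::nat) = \<one>"
  by (metis M_carrier M_exponent dvdE nat_pow_one nat_pow_pow)

definition primary_part :: "nat \<Rightarrow> 'a set" where
  "primary_part p = {m \<in> M. \<exists>e::nat. m [^] (p ^ e) = \<one>}"

lemma primary_part_M: "m \<in> primary_part p \<Longrightarrow> m \<in> M"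
  unfolding primary_part_def by simp

text \<open>Since \<open>\<Prod>P\<close> is squarefree, the \<open>p\<close>-elements of \<open>M\<close> have order dividing \<open>p\<close>.\<close>

lemma primary_part_iff:
  assumes "p \<in> P"
  shows "m \<in> primary_part p \<longleftrightarrow> m \<in> M \<and> m [^] p = \<one>"
proof
  assume "m \<in> primary_part p"
  then obtain e where m: "m \<in> M" and e: "m [^] (p ^ e) = \<one>"
    unfolding primary_part_def by blast
  have coprime: "coprime (p ^ e) (\<Prod>(P - {p}))"
    using prime_not_dvd_prod_others[OF finite_P prime_P assms] prime_P[OF assms]
    by (simp add: prime_imp_coprime)
  have "\<Prod>P = p * \<Prod>(P - {p})"
    using assms finite_P by (metis prod.remove)
  then have "gcd (p ^ e) (\<Prod>P) = gcd (p ^ e) p"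
    using gcd_mult_right_right_cancel[OF coprime] by simp
  moreover have "ord m dvd gcd (p ^ e) (\<Prod>P)"
    using e M_exponent[OF m] pow_eq_id[OF M_carrier[OF m]] by simp
  ultimately have "ord m dvd p"
    by (metis dvd_trans gcd_dvd2)
  then show "m \<in> M \<and> m [^] p = \<one>"
    using m pow_eq_id[OF M_carrier[OF m]] by simp
next
  assume "m \<in> M \<and> m [^] p = \<one>"
  then show "m \<in> primary_part p"
    unfolding primary_part_def by (metis (mono_tags, lifting) mem_Collect_eq power_one_right)
qed

lemma primary_part_subgroup:
  assumes "p \<in> P"
  shows "subgroup (primary_part p) H"
proof (rule subgroupI)
  show "primary_part p \<subseteq> carrier H"
    using primary_part_M M_carrier by blast
  show "primary_part p \<noteq> {}"
    using primary_part_iff[OF assms, of \<one>] by auto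
  fix x y assume "x \<in> primary_part p" "y \<in> primary_part p"
  then have "x \<in> M" "y \<in> M" "x [^] p = \<one>" "y [^] p = \<one>"
    using primary_part_iff[OF assms] by auto
  then show "inv x \<in> primary_part p" "x \<otimes> y \<in> primary_part p"
    using primary_part_iff[OF assms] pow_mult_distrib[OF M_comm] M_carrier
    by (auto simp: nat_pow_inv)
qed

lemma hom_primary_part:
  assumes "a \<in> hom M_group M_group" "p \<in> P" "m \<in> primary_part p"
  shows "a m \<in> primary_part p"
proof -
  have "m \<in> M" "m [^] p = \<one>"
    using assms primary_part_iff by auto
  moreover have "a (m [^] p) = a m [^] p"
    using hom_nat_pow[OF assms(1), of m p] \<open>m \<in> M\<close> by (simp add: nat_pow_consistent[symmetric])
  ultimately show ?thesis
    using primary_part_iff[OF assms(2)] hom_in_carrier[OF assms(1)]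
      hom_one[OF assms(1) M_group.is_group M_group.is_group] by auto
qed

text \<open>The projection onto \<open>primary_part p\<close> is the power map with the idempotent exponent;
  \<open>primary_exp\<close> is meaningful only for \<open>p \<in> P\<close>.\<close>

definition primary_exp :: "nat \<Rightarrow> nat" where
  "primary_exp p = (SOME e. e mod p = 1 \<and> (\<forall>q\<in>P. q \<noteq> p \<longrightarrow> q dvd e))"

definition primary_proj :: "nat \<Rightarrow> 'a \<Rightarrow> 'a" where
  "primary_proj p m = m [^] primary_exp p"

lemma primary_exp_mod: "p \<in> P \<Longrightarrow> primary_exp p mod p = 1"
  and primary_exp_dvd: "p \<in> P \<Longrightarrow> q \<in> P \<Longrightarrow> q \<noteq> p \<Longrightarrow> q dvd primary_exp p"
  unfolding primary_exp_def
  using someI_ex[OF exists_idempotent_exponent[OF finite_P prime_P]] by blast+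

lemma primary_proj_M [simp]: "m \<in> M \<Longrightarrow> primary_proj p m \<in> M"
  unfolding primary_proj_def by simp

lemma primary_proj_primary_part:
  assumes "p \<in> P" "m \<in> M"
  shows "primary_proj p m \<in> primary_part p"
proof -
  have "\<Prod>P dvd primary_exp p * p"
  proof (rule prod_distinct_primes_dvd[OF finite_P prime_P])
    fix q assume "q \<in> P"
    then show "q dvd primary_exp p * p"
      using primary_exp_dvd[OF assms(1)] by (cases "q = p") auto
  qed
  then have "primary_proj p m [^] p = \<one>"
    unfolding primary_proj_def using pow_eq_one_if_dvd[OF assms(2)] M_carrier[OF assms(2)]
    by (simp add: nat_pow_pow)
  then show ?thesis
    using primary_part_iff[OF assms(1)] assms(2) by simp
qed

lemma primary_proj_on_primary_part:
  assumes "p \<in> P" "q \<in> P" "m \<in> primary_part p"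
  shows "primary_proj q m = (if q = p then m else \<one>)"
proof -
  have m: "m \<in> carrier H" "m [^] p = \<one>"
    using assms primary_part_iff M_carrier by auto
  have "m [^] j = m [^] (j mod p)" for j :: nat
  proof -
    have "m [^] (j mod p) = (m [^] p) [^] (j div p) \<otimes> m [^] (j mod p)"
      using m by simp
    also have "\<dots> = m [^] (p * (j div p) + j mod p)"
      using m(1) by (simp only: nat_pow_pow nat_pow_mult)
    finally show ?thesis
      by simp
  qed
  then have "primary_proj q m = m [^] (primary_exp q mod p)"
    unfolding primary_proj_def by blast
  then show ?thesis
    using m primary_exp_mod[OF assms(2)] primary_exp_dvd[OF assms(2,1)] by auto
qed

lemma primary_proj_idem: "p \<in> P \<Longrightarrow> m \<in> primary_part p \<Longrightarrow> primary_proj p m = m"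
  using primary_proj_on_primary_part by simp

lemma primary_proj_mult: "x \<in> M \<Longrightarrow> y \<in> M \<Longrightarrow> primary_proj p (x \<otimes> y) = primary_proj p x \<otimes> primary_proj p y"
  unfolding primary_proj_def using pow_mult_distrib M_comm M_carrier by blast

lemma primary_proj_inv: "x \<in> M \<Longrightarrow> primary_proj p (inv x) = inv (primary_proj p x)"
  unfolding primary_proj_def using M_carrier by (simp add: nat_pow_inv)

lemma primary_proj_hom: "primary_proj p \<in> hom M_group M_group"
  by (rule homI) (auto simp: primary_proj_mult)

lemma hom_commute_primary_proj:
  assumes "a \<in> hom M_group M_group" "m \<in> M"
  shows "a (primary_proj p m) = primary_proj p (a m)"
  unfolding primary_proj_def using hom_nat_pow[OF assms(1), of m] assms M_group.is_group
  by (simp add: nat_pow_consistent[symmetric])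

lemma finprod_pow_sum:
  assumes "finite Q" "m \<in> M"
  shows "finprod M_group (\<lambda>q. m [^] (f q :: nat)) Q = m [^] sum f Q"
  using assms(1)
proof (induction Q rule: finite_induct)
  case (insert q Q)
  then show ?case
    using assms(2) M_carrier by (simp add: M_pow nat_pow_mult)
qed simp

text \<open>The exponents sum to \<open>1\<close> modulo \<open>\<Prod>P\<close>, so the projections decompose every element.\<close>

lemma finprod_primary_proj:
  assumes "m \<in> M"
  shows "finprod M_group (\<lambda>q. primary_proj q m) P = m"
proof (cases "P = {}")
  case True
  then show ?thesis
    using M_exponent[OF assms] M_carrier assms by simp
next
  case False
  let ?S = "sum primary_exp P"
  have S_mod: "?S mod p = 1" if p: "p \<in> P" for p
  proof -
    have "p dvd sum primary_exp (P - {p})"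
      using primary_exp_dvd p by (intro dvd_sum) auto
    then show ?thesis
      using p finite_P primary_exp_mod[OF p]
      by (simp add: sum.remove) (metis mod_add_right_eq add.right_neutral dvd_imp_mod_0)
  qed
  then have S1: "?S \<ge> 1"
    using False by (metis One_nat_def Suc_leI ex_in_conv gr0I mod_0 zero_neq_one)
  have "\<Prod>P dvd ?S - 1"
  proof (rule prod_distinct_primes_dvd[OF finite_P prime_P])
    fix p assume "p \<in> P"
    then have "?S mod p = 1 mod p"
      using S_mod prime_gt_1_nat[OF prime_P[OF \<open>p \<in> P\<close>]] by simp
    then show "p dvd ?S - 1"
      using mod_eq_dvd_iff_nat[OF S1] by blast
  qed
  then have "m [^] ?S = m"
    using pow_eq_one_if_dvd[OF assms] S1 M_carrier[OF assms] nat_pow_mult[of m "?S - 1" 1] by simp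
  moreover have "finprod M_group (\<lambda>q. m [^] primary_exp q) P = m [^] ?S"
    using finprod_pow_sum[OF finite_P assms] .
  ultimately show ?thesis
    unfolding primary_proj_def by simp
qed

lemma hom_eq_on_primary_parts:
  assumes "a \<in> hom M_group M_group" "b \<in> hom M_group M_group" "m \<in> M"
    and "\<And>p x. p \<in> P \<Longrightarrow> x \<in> primary_part p \<Longrightarrow> a x = b x"
  shows "a m = b m"
proof -
  have proj: "(\<lambda>q. primary_proj q m) \<in> P \<rightarrow> carrier M_group"
    using assms by auto
  have "a m = finprod M_group (\<lambda>q. a (primary_proj q m)) P"
    using hom_finprod[OF _ _ assms(1) finite_P proj] finprod_primary_proj[OF assms(3)]
      M_group.comm_group_axioms by simp
  also have "\<dots> = finprod M_group (\<lambda>q. b (primary_proj q m)) P"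
    using assms primary_proj_primary_part hom_in_carrier[OF assms(2)] primary_proj_M
    by (intro M_group.finprod_cong') (auto simp: Pi_def)
  also have "\<dots> = b m"
    using hom_finprod[OF _ _ assms(2) finite_P proj] finprod_primary_proj[OF assms(3)]
      M_group.comm_group_axioms by simp
  finally show ?thesis .
qed

lemma primary_proj_finprod:
  assumes "p \<in> P" "\<And>q. q \<in> P \<Longrightarrow> x q \<in> primary_part q"
  shows "primary_proj p (finprod M_group x P) = x p"
proof -
  have xM: "x q \<in> M" if "q \<in> P" for q
    using assms(2)[OF that] primary_part_M by blast
  then have x: "x \<in> P \<rightarrow> carrier M_group"
    by auto
  have "primary_proj p (finprod M_group x P) = finprod M_group (\<lambda>q. primary_proj p (x q)) P"
    using hom_finprod[OF _ _ primary_proj_hom finite_P x] M_group.comm_group_axioms by simp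
  also have "\<dots> = finprod M_group (\<lambda>q. if p = q then x q else \<one>\<^bsub>M_group\<^esub>) P"
    using assms primary_proj_on_primary_part xM by (intro M_group.finprod_cong') auto
  also have "\<dots> = x p"
    using M_group.finprod_singleton[OF assms(1) finite_P] x by auto
  finally show ?thesis .
qed

lemma Aut_image_primary_part:
  assumes "a \<in> Aut M_group" "p \<in> P"
  shows "a ` primary_part p = primary_part p"
proof
  have a: "a \<in> hom M_group M_group" "a ` M = M"
    using assms unfolding Aut_def iso_def bij_betw_def by auto
  show "a ` primary_part p \<subseteq> primary_part p"
    using hom_primary_part[OF a(1) assms(2)] by blast
  show "primary_part p \<subseteq> a ` primary_part p"
  proof
    fix n assume n: "n \<in> primary_part p"
    then obtain x where x: "x \<in> M" "n = a x"
      using a(2) primary_part_M by (metis imageE)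
    then have "n = a (primary_proj p x)"
      using primary_proj_idem[OF assms(2) n] hom_commute_primary_proj[OF a(1)] by simp
    then show "n \<in> a ` primary_part p"
      using primary_proj_primary_part[OF assms(2) x(1)] by blast
  qed
qed

lemma Aut_restrict_primary_part:
  assumes "a \<in> Aut M_group" "p \<in> P"
  shows "restrict a (primary_part p) \<in> Aut (H\<lparr>carrier := primary_part p\<rparr>)"
proof -
  have a: "a \<in> hom M_group M_group" "inj_on a M"
    using assms unfolding Aut_def iso_def bij_betw_def by auto
  have "inj_on a (primary_part p)"
    using a(2) primary_part_M by (meson inj_on_subset subsetI)
  then have "bij_betw a (primary_part p) (primary_part p)"
    using Aut_image_primary_part[OF assms] unfolding bij_betw_def by blast
  then have "bij_betw (restrict a (primary_part p)) (primary_part p) (primary_part p)"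
    using bij_betw_cong[of "primary_part p" "restrict a (primary_part p)" a] by simp
  moreover have "restrict a (primary_part p) \<in>
      hom (H\<lparr>carrier := primary_part p\<rparr>) (H\<lparr>carrier := primary_part p\<rparr>)"
  proof (rule homI)
    fix x y assume "x \<in> carrier (H\<lparr>carrier := primary_part p\<rparr>)" "y \<in> carrier (H\<lparr>carrier := primary_part p\<rparr>)"
    then show "restrict a (primary_part p) (x \<otimes>\<^bsub>H\<lparr>carrier := primary_part p\<rparr>\<^esub> y) =
        restrict a (primary_part p) x \<otimes>\<^bsub>H\<lparr>carrier := primary_part p\<rparr>\<^esub> restrict a (primary_part p) y"
      using hom_mult[OF a(1)] primary_part_M subgroup.m_closed[OF primary_part_subgroup[OF assms(2)]]
      by simp
  next
    fix x assume "x \<in> carrier (H\<lparr>carrier := primary_part p\<rparr>)"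
    then show "restrict a (primary_part p) x \<in> carrier (H\<lparr>carrier := primary_part p\<rparr>)"
      using hom_primary_part[OF a(1) assms(2)] by simp
  qed
  ultimately show ?thesis
    unfolding Aut_def iso_def by simp
qed

end

section \<open>Abelian extensions and the group \<open>W\<close>\<close>

locale abelian_extension = squarefree_exponent_subgroup H M P
  for H :: "'a monoid" (structure) and M P +
  fixes G :: "'g monoid" and pr :: "'a \<Rightarrow> 'g" and t :: "'g \<Rightarrow> 'a"
  assumes group_G: "group G"
    and pr_hom: "pr \<in> hom H G"
    and pr_eq_one_iff: "\<And>x. x \<in> carrier H \<Longrightarrow> pr x = \<one>\<^bsub>G\<^esub> \<longleftrightarrow> x \<in> M"
    and t_carrier: "\<And>g. g \<in> carrier G \<Longrightarrow> t g \<in> carrier H"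
    and pr_t: "\<And>g. g \<in> carrier G \<Longrightarrow> pr (t g) = g"
begin

sublocale G: group G
  by (fact group_G)

sublocale pr: group_hom H G pr
  by (simp add: group_hom_def group_hom_axioms_def is_group group_G pr_hom)

lemma pr_eq_iff:
  assumes "x \<in> carrier H" "y \<in> carrier H"
  shows "pr x = pr y \<longleftrightarrow> x \<otimes> inv y \<in> M"
  using pr_eq_one_iff[of "x \<otimes> inv y"] assms G.inv_solve_right'[of "\<one>\<^bsub>G\<^esub>" "pr x" "pr y"] by simp

lemma conj_M:
  assumes "x \<in> carrier H" "m \<in> M"
  shows "x \<otimes> m \<otimes> inv x \<in> M"
  using assms pr_eq_one_iff[of "x \<otimes> m \<otimes> inv x"] pr_eq_one_iff[of m] M_carrier by simp

lemma conj_eq_if_pr_eq: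
  assumes "x \<in> carrier H" "y \<in> carrier H" "pr x = pr y" "m \<in> M"
  shows "x \<otimes> m \<otimes> inv x = y \<otimes> m \<otimes> inv y"
proof -
  define n where "n = x \<otimes> inv y"
  have n: "n \<in> M" and x: "x = n \<otimes> y"
    using assms pr_eq_iff by (auto simp: n_def m_assoc)
  have "x \<otimes> m \<otimes> inv x = n \<otimes> (y \<otimes> m \<otimes> inv y) \<otimes> inv n"
    using x assms n M_carrier by (simp add: m_assoc inv_mult_group)
  also have "\<dots> = y \<otimes> m \<otimes> inv y"
    using M_conj[OF n conj_M] assms by simp
  finally show ?thesis .
qed

definition act :: "'g \<Rightarrow> 'a \<Rightarrow> 'a" where
  "act g m = t g \<otimes> m \<otimes> inv (t g)"

lemma act_M [simp]: "g \<in> carrier G \<Longrightarrow> m \<in> M \<Longrightarrow> act g m \<in> M"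
  unfolding act_def using conj_M t_carrier by blast

lemma act_conj:
  assumes x: "x \<in> carrier H" and m: "m \<in> M"
  shows "x \<otimes> m \<otimes> inv x = act (pr x) m"
proof -
  have "pr x \<in> carrier G"
    using x by simp
  then show ?thesis
    unfolding act_def using conj_eq_if_pr_eq[OF x t_carrier _ m] pr_t by metis
qed

lemma act_swap:
  assumes x: "x \<in> carrier H" and m: "m \<in> M"
  shows "x \<otimes> m = act (pr x) m \<otimes> x"
proof -
  have "act (pr x) m \<otimes> x = x \<otimes> m \<otimes> inv x \<otimes> x"
    using act_conj[OF x m] by simp
  also have "\<dots> = x \<otimes> m"
    using x m M_carrier by (simp add: m_assoc)
  finally show ?thesis
    by simp
qed

lemma act_mult: "g \<in> carrier G \<Longrightarrow> x \<in> M \<Longrightarrow> y \<in> M \<Longrightarrow> act g (x \<otimes> y) = act g x \<otimes> act g y"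
  unfolding act_def using t_carrier M_carrier by (simp add: m_assoc)

lemma act_inv: "g \<in> carrier G \<Longrightarrow> m \<in> M \<Longrightarrow> act g (inv m) = inv (act g m)"
  unfolding act_def using t_carrier M_carrier by (simp add: m_assoc inv_mult_group)

lemma act_pow: "g \<in> carrier G \<Longrightarrow> m \<in> M \<Longrightarrow> act g (m [^] (n::nat)) = act g m [^] n"
proof (induction n)
  case 0
  then show ?case
    unfolding act_def using t_carrier by simp
next
  case (Suc n)
  then show ?case
    using act_mult by (simp add: M_pow)
qed

lemma act_one_left: "m \<in> M \<Longrightarrow> act \<one>\<^bsub>G\<^esub> m = m"
  using act_conj[of \<one> m] M_carrier by simp

lemma act_primary_part:
  assumes "p \<in> P" "g \<in> carrier G" "m \<in> primary_part p"
  shows "act g m \<in> primary_part p"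
proof -
  have m: "m \<in> M" "m [^] p = \<one>"
    using assms primary_part_iff by auto
  then have "act g m [^] p = \<one>"
    using act_pow[OF assms(2) m(1), of p] t_carrier[OF assms(2)] by (simp add: act_def)
  then show ?thesis
    using primary_part_iff[OF assms(1)] act_M[OF assms(2) m(1)] by blast
qed

lemma primary_proj_act: "g \<in> carrier G \<Longrightarrow> m \<in> M \<Longrightarrow> primary_proj p (act g m) = act g (primary_proj p m)"
  unfolding primary_proj_def using act_pow by simp

definition coboundary :: "('g \<Rightarrow> 'a) \<Rightarrow> 'g \<Rightarrow> 'g \<Rightarrow> 'a" where
  "coboundary \<psi> g h = act g (\<psi> h) \<otimes> inv (\<psi> (g \<otimes>\<^bsub>G\<^esub> h)) \<otimes> \<psi> g"

lemma coboundary_M: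
  "g \<in> carrier G \<Longrightarrow> h \<in> carrier G \<Longrightarrow> \<psi> \<in> carrier G \<rightarrow> M \<Longrightarrow> coboundary \<psi> g h \<in> M"
  unfolding coboundary_def by (simp add: Pi_iff)

lemma primary_proj_coboundary:
  assumes "g \<in> carrier G" "h \<in> carrier G" "\<psi> \<in> carrier G \<rightarrow> M"
  shows "primary_proj p (coboundary \<psi> g h) = coboundary (\<lambda>g. primary_proj p (\<psi> g)) g h"
  unfolding coboundary_def using assms primary_proj_mult primary_proj_inv primary_proj_act
  by (simp add: Pi_iff)

lemma coboundary_mult_cancel:
  assumes "g \<in> carrier G" "h \<in> carrier G" "\<psi> \<in> carrier G \<rightarrow> M"
  shows "coboundary \<psi> g h \<otimes> \<psi> (g \<otimes>\<^bsub>G\<^esub> h) = act g (\<psi> h) \<otimes> \<psi> g"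
proof -
  have "\<psi> g \<in> M" "\<psi> h \<in> M" "\<psi> (g \<otimes>\<^bsub>G\<^esub> h) \<in> M"
    using assms by auto
  then show ?thesis
    unfolding coboundary_def using assms M_comm[of "\<psi> g" "\<psi> (g \<otimes>\<^bsub>G\<^esub> h)"]
    by (simp add: m_assoc M_carrier)
qed

text \<open>\<open>W = ker \<eta>\<^sub>G\<close>: the automorphisms of \<open>H\<close> leaving \<open>M\<close> invariant and acting trivially on \<open>H/M\<close>.\<close>

definition W :: "('a \<Rightarrow> 'a) set" where
  "W = {a \<in> iso H H. a ` M = M \<and> (\<forall>x\<in>carrier H. M #> a x = M #> x)}"

lemma W_hom: "a \<in> W \<Longrightarrow> a \<in> hom H H"
  unfolding W_def iso_def by blast

lemma W_carrier: "a \<in> W \<Longrightarrow> x \<in> carrier H \<Longrightarrow> a x \<in> carrier H"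
  using hom_in_carrier[OF W_hom] .

lemma W_M: "a \<in> W \<Longrightarrow> m \<in> M \<Longrightarrow> a m \<in> M"
  unfolding W_def by blast

lemma W_primary_proj: "a \<in> W \<Longrightarrow> m \<in> M \<Longrightarrow> a (primary_proj p m) = primary_proj p (a m)"
  unfolding primary_proj_def using hom_nat_pow[OF W_hom] M_carrier by simp

lemma W_coset:
  assumes "a \<in> W" "x \<in> carrier H"
  shows "a x \<otimes> inv x \<in> M"
proof -
  have "M #> a x = M #> x"
    using assms unfolding W_def by blast
  then show ?thesis
    using rcos_eq_iff[OF M_subgroup W_carrier[OF assms] assms(2)] by simp
qed

lemma W_pr: "a \<in> W \<Longrightarrow> x \<in> carrier H \<Longrightarrow> pr (a x) = pr x"
  using pr_eq_iff W_carrier W_coset by simp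

lemma W_act:
  assumes "a \<in> W" "g \<in> carrier G" "m \<in> M"
  shows "a (act g m) = act g (a m)"
proof -
  interpret a: group_hom H H a
    using W_hom[OF assms(1)] by (simp add: group_hom_def group_hom_axioms_def is_group)
  have "a (act g m) = a (t g) \<otimes> a m \<otimes> inv (a (t g))"
    unfolding act_def using t_carrier assms M_carrier by simp
  also have "\<dots> = act g (a m)"
    using act_conj[of "a (t g)" "a m"] W_carrier W_M W_pr assms t_carrier pr_t by simp
  finally show ?thesis .
qed

lemma W_restrict_Aut:
  assumes "a \<in> W"
  shows "restrict a M \<in> Aut M_group"
proof -
  have "inj_on a (carrier H)"
    using assms unfolding W_def iso_def bij_betw_def by blast
  then have "inj_on a M"
    by (rule inj_on_subset) (use M_carrier in blast)
  moreover have "a ` M = M"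
    using assms unfolding W_def by blast
  ultimately have "bij_betw (restrict a M) M M"
    using bij_betw_cong[of M "restrict a M" a] by (simp add: bij_betw_def)
  moreover have "restrict a M \<in> hom M_group M_group"
  proof (rule homI)
    fix x y assume "x \<in> carrier M_group" "y \<in> carrier M_group"
    then show "restrict a M (x \<otimes>\<^bsub>M_group\<^esub> y) = restrict a M x \<otimes>\<^bsub>M_group\<^esub> restrict a M y"
      using hom_mult[OF W_hom[OF assms]] M_carrier by simp
  qed (use W_M[OF assms] in simp)
  ultimately show ?thesis
    unfolding Aut_def iso_def by simp
qed

lemma id_in_W: "(\<lambda>x. x) \<in> W"
  unfolding W_def using iso_set_refl by simp

lemma W_comp:
  assumes a: "a \<in> W" and b: "b \<in> W"
  shows "b \<circ> a \<in> W"
proof -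
  have "a \<in> iso H H" "b \<in> iso H H" "a ` M = M" "b ` M = M"
    using a b unfolding W_def by auto
  then have "b \<circ> a \<in> iso H H" "(b \<circ> a) ` M = M"
    using iso_set_trans image_comp[of b a M] by auto
  moreover have "M #> (b \<circ> a) x = M #> x" if "x \<in> carrier H" for x
  proof -
    have "M #> b (a x) = M #> a x"
      using b W_carrier[OF a that] unfolding W_def by blast
    also have "\<dots> = M #> x"
      using a that unfolding W_def by blast
    finally show ?thesis
      by simp
  qed
  ultimately show ?thesis
    unfolding W_def by blast
qed

end

locale abelian_extension_cocycle = abelian_extension H M P G pr t
  for H :: "'a monoid" (structure) and M P and G :: "'g monoid" and pr t +
  fixes s :: "'g \<Rightarrow> 'a" and eps :: "'g \<Rightarrow> 'g \<Rightarrow> 'a"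
  assumes s_carrier: "\<And>g. g \<in> carrier G \<Longrightarrow> s g \<in> carrier H"
    and pr_s: "\<And>g. g \<in> carrier G \<Longrightarrow> pr (s g) = g"
    and eps_def: "\<And>g h. g \<in> carrier G \<Longrightarrow> h \<in> carrier G \<Longrightarrow>
                    eps g h = s g \<otimes> s h \<otimes> inv (s (g \<otimes>\<^bsub>G\<^esub> h))"
begin

lemma eps_M [simp]:
  assumes "g \<in> carrier G" "h \<in> carrier G"
  shows "eps g h \<in> M"
  using pr_eq_iff[of "s g \<otimes> s h" "s (g \<otimes>\<^bsub>G\<^esub> h)"] assms s_carrier pr_s eps_def by simp

lemma s_mult: "g \<in> carrier G \<Longrightarrow> h \<in> carrier G \<Longrightarrow> s g \<otimes> s h = eps g h \<otimes> s (g \<otimes>\<^bsub>G\<^esub> h)"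
  using eps_def s_carrier by (simp add: m_assoc)

lemma normal_form_M: "x \<in> carrier H \<Longrightarrow> x \<otimes> inv (s (pr x)) \<in> M"
  using pr_eq_iff[of x "s (pr x)"] s_carrier pr_s by simp

lemma normal_form: "x \<in> carrier H \<Longrightarrow> x = (x \<otimes> inv (s (pr x))) \<otimes> s (pr x)"
  using s_carrier by (simp add: m_assoc)

lemma normal_formE:
  assumes "x \<in> carrier H"
  obtains m g where "m \<in> M" "g \<in> carrier G" "x = m \<otimes> s g"
proof (rule that)
  show "x \<otimes> inv (s (pr x)) \<in> M" "pr x \<in> carrier G"
    using assms normal_form_M by simp_all
  show "x = x \<otimes> inv (s (pr x)) \<otimes> s (pr x)"
    using assms by (rule normal_form)
qed

lemma pr_normal_form: "m \<in> M \<Longrightarrow> g \<in> carrier G \<Longrightarrow> pr (m \<otimes> s g) = g"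
  using pr_eq_one_iff M_carrier s_carrier pr_s by simp

lemma normal_form_unique:
  assumes "m \<in> M" "g \<in> carrier G"
  shows "(m \<otimes> s g) \<otimes> inv (s (pr (m \<otimes> s g))) = m"
  using assms pr_normal_form M_carrier s_carrier by (simp add: m_assoc)

lemma mult_normal_form:
  assumes "m \<in> M" "n \<in> M" "g \<in> carrier G" "h \<in> carrier G"
  shows "(m \<otimes> s g) \<otimes> (n \<otimes> s h) = (m \<otimes> act g n \<otimes> eps g h) \<otimes> s (g \<otimes>\<^bsub>G\<^esub> h)"
proof -
  have "(m \<otimes> s g) \<otimes> (n \<otimes> s h) = m \<otimes> (s g \<otimes> n) \<otimes> s h"
    using assms M_carrier s_carrier by (simp add: m_assoc)
  also have "s g \<otimes> n = act g n \<otimes> s g"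
    using act_swap[of "s g" n] assms s_carrier pr_s by simp
  also have "m \<otimes> (act g n \<otimes> s g) \<otimes> s h = m \<otimes> act g n \<otimes> (s g \<otimes> s h)"
    using assms M_carrier s_carrier act_M by (simp add: m_assoc)
  finally show ?thesis
    using s_mult assms M_carrier s_carrier act_M eps_M by (simp add: m_assoc)
qed

definition twists_cocycle :: "('a \<Rightarrow> 'a) \<Rightarrow> ('g \<Rightarrow> 'a) \<Rightarrow> bool" where
  "twists_cocycle \<alpha> \<psi> \<longleftrightarrow> \<psi> \<in> carrier G \<rightarrow> M \<and>
     (\<forall>g\<in>carrier G. \<forall>h\<in>carrier G. \<alpha> (eps g h) = eps g h \<otimes> coboundary \<psi> g h)"

lemma W_twists_cocycle:
  assumes "a \<in> W"
  shows "twists_cocycle a (\<lambda>g. a (s g) \<otimes> inv (s g))"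
proof -
  interpret a: group_hom H H a
    using W_hom[OF assms] by (simp add: group_hom_def group_hom_axioms_def is_group)
  define \<psi> where "\<psi> g = a (s g) \<otimes> inv (s g)" for g
  have \<psi>: "\<psi> g \<in> M" "a (s g) = \<psi> g \<otimes> s g" if "g \<in> carrier G" for g
    using W_coset[OF assms] s_carrier W_carrier[OF assms] that by (auto simp: \<psi>_def m_assoc)
  have "a (eps g h) = eps g h \<otimes> coboundary \<psi> g h" if g: "g \<in> carrier G" and h: "h \<in> carrier G" for g h
  proof -
    have gh: "g \<otimes>\<^bsub>G\<^esub> h \<in> carrier G"
      using g h by simp
    have "a (eps g h) = (\<psi> g \<otimes> s g) \<otimes> (\<psi> h \<otimes> s h) \<otimes> inv (\<psi> (g \<otimes>\<^bsub>G\<^esub> h) \<otimes> s (g \<otimes>\<^bsub>G\<^esub> h))"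
      using eps_def[OF g h] s_carrier g h gh \<psi> by simp
    also have "\<dots> = \<psi> g \<otimes> act g (\<psi> h) \<otimes> eps g h \<otimes> inv (\<psi> (g \<otimes>\<^bsub>G\<^esub> h))"
      using mult_normal_form[OF \<psi>(1) \<psi>(1) g h] g h gh \<psi> s_carrier M_carrier act_M eps_M
      by (simp add: m_assoc inv_mult_group)
    also have "\<dots> = eps g h \<otimes> coboundary \<psi> g h"
      unfolding coboundary_def using g h gh \<psi> act_M eps_M M_inv by (simp add: M_ac)
    finally show ?thesis .
  qed
  then show ?thesis
    unfolding twists_cocycle_def \<psi>_def[symmetric] using \<psi> by blast
qed

text \<open>Conversely, an automorphism \<open>\<alpha>\<close> of \<open>M\<close> twisting \<open>eps\<close> by \<open>\<psi>\<close> extends to \<open>H\<close> by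
  \<open>m \<otimes> s g \<mapsto> \<alpha> m \<otimes> \<psi> g \<otimes> s g\<close>.\<close>

definition extend_aut :: "('a \<Rightarrow> 'a) \<Rightarrow> ('g \<Rightarrow> 'a) \<Rightarrow> 'a \<Rightarrow> 'a" where
  "extend_aut \<alpha> \<psi> x = \<alpha> (x \<otimes> inv (s (pr x))) \<otimes> \<psi> (pr x) \<otimes> s (pr x)"

lemma extend_aut_normal_form:
  "m \<in> M \<Longrightarrow> g \<in> carrier G \<Longrightarrow> extend_aut \<alpha> \<psi> (m \<otimes> s g) = \<alpha> m \<otimes> \<psi> g \<otimes> s g"
  unfolding extend_aut_def using normal_form_unique pr_normal_form by simp

context
  fixes \<alpha> :: "'a \<Rightarrow> 'a" and \<psi> :: "'g \<Rightarrow> 'a"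
  assumes \<alpha>: "\<alpha> \<in> Aut M_group"
    and \<alpha>_act: "\<And>g m. g \<in> carrier G \<Longrightarrow> m \<in> M \<Longrightarrow> \<alpha> (act g m) = act g (\<alpha> m)"
    and twists: "twists_cocycle \<alpha> \<psi>"
begin

private lemma \<alpha>_hom: "\<alpha> \<in> hom M_group M_group"
  using \<alpha> unfolding Aut_def iso_def by blast

private lemma \<alpha>_bij: "bij_betw \<alpha> M M"
  using \<alpha> unfolding Aut_def iso_def by simp

private lemma \<alpha>_M [simp]: "m \<in> M \<Longrightarrow> \<alpha> m \<in> M"
  using hom_in_carrier[OF \<alpha>_hom] by simp

private lemma \<alpha>_mult: "x \<in> M \<Longrightarrow> y \<in> M \<Longrightarrow> \<alpha> (x \<otimes> y) = \<alpha> x \<otimes> \<alpha> y"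
  using hom_mult[OF \<alpha>_hom] by simp

private lemma \<alpha>_inv: "x \<in> M \<Longrightarrow> \<alpha> (inv x) = inv (\<alpha> x)"
  using group_hom.hom_inv[of M_group M_group \<alpha> x] \<alpha>_hom M_group.is_group
    m_inv_consistent[OF M_subgroup] \<alpha>_M
  by (simp add: group_hom_def group_hom_axioms_def)

private lemma \<psi>_Pi: "\<psi> \<in> carrier G \<rightarrow> M"
  using twists unfolding twists_cocycle_def by blast

private lemma \<psi>_M [simp]: "g \<in> carrier G \<Longrightarrow> \<psi> g \<in> M"
  using \<psi>_Pi by blast

private lemma \<alpha>_eps: "g \<in> carrier G \<Longrightarrow> h \<in> carrier G \<Longrightarrow> \<alpha> (eps g h) = eps g h \<otimes> coboundary \<psi> g h"
  using twists unfolding twists_cocycle_def by blast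

lemma extend_aut_carrier: "x \<in> carrier H \<Longrightarrow> extend_aut \<alpha> \<psi> x \<in> carrier H"
  unfolding extend_aut_def using normal_form_M s_carrier M_carrier by auto

lemma extend_aut_mult:
  assumes x: "x \<in> carrier H" and y: "y \<in> carrier H"
  shows "extend_aut \<alpha> \<psi> (x \<otimes> y) = extend_aut \<alpha> \<psi> x \<otimes> extend_aut \<alpha> \<psi> y"
proof -
  obtain m g where m: "m \<in> M" and g: "g \<in> carrier G" and x_eq: "x = m \<otimes> s g"
    using x by (rule normal_formE)
  obtain n h where n: "n \<in> M" and h: "h \<in> carrier G" and y_eq: "y = n \<otimes> s h"
    using y by (rule normal_formE)
  note mn = m n and gh = g h G.m_closed[OF g h]
  have "x \<otimes> y = (m \<otimes> act g n \<otimes> eps g h) \<otimes> s (g \<otimes>\<^bsub>G\<^esub> h)"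
    using x_eq y_eq mult_normal_form mn gh by simp
  then have "extend_aut \<alpha> \<psi> (x \<otimes> y) =
      \<alpha> (m \<otimes> act g n \<otimes> eps g h) \<otimes> \<psi> (g \<otimes>\<^bsub>G\<^esub> h) \<otimes> s (g \<otimes>\<^bsub>G\<^esub> h)"
    using extend_aut_normal_form[of "m \<otimes> act g n \<otimes> eps g h" "g \<otimes>\<^bsub>G\<^esub> h"] mn gh by simp
  also have "\<alpha> (m \<otimes> act g n \<otimes> eps g h) \<otimes> \<psi> (g \<otimes>\<^bsub>G\<^esub> h) =
      \<alpha> m \<otimes> act g (\<alpha> n) \<otimes> eps g h \<otimes> (coboundary \<psi> g h \<otimes> \<psi> (g \<otimes>\<^bsub>G\<^esub> h))"
    using mn gh \<alpha>_mult \<alpha>_act \<alpha>_eps coboundary_M \<psi>_Pi by (simp add: m_assoc M_carrier)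
  also have "\<dots> = \<alpha> m \<otimes> \<psi> g \<otimes> act g (\<alpha> n \<otimes> \<psi> h) \<otimes> eps g h"
    using mn gh coboundary_mult_cancel \<psi>_Pi by (simp add: act_mult M_ac)
  also have "\<dots> \<otimes> s (g \<otimes>\<^bsub>G\<^esub> h) = extend_aut \<alpha> \<psi> x \<otimes> extend_aut \<alpha> \<psi> y"
    using x_eq y_eq mult_normal_form[of "\<alpha> m \<otimes> \<psi> g" "\<alpha> n \<otimes> \<psi> h" g h] extend_aut_normal_form mn gh
    by simp
  finally show ?thesis .
qed

lemma extend_aut_on_M:
  assumes "m \<in> M"
  shows "extend_aut \<alpha> \<psi> m = \<alpha> m"
proof -
  let ?e = "\<one>\<^bsub>G\<^esub>"
  have s_e: "s ?e \<in> M"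
    using pr_eq_one_iff s_carrier pr_s G.one_closed by metis
  have "eps ?e ?e = s ?e"
    using eps_def[of ?e ?e] s_carrier by (simp add: m_assoc)
  then have "\<alpha> (s ?e) = s ?e \<otimes> \<psi> ?e"
    using \<alpha>_eps[of ?e ?e] act_one_left s_e M_carrier by (simp add: coboundary_def m_assoc)
  moreover have "m = (m \<otimes> inv (s ?e)) \<otimes> s ?e"
    using assms s_carrier M_carrier by (simp add: m_assoc)
  ultimately show ?thesis
    using extend_aut_normal_form[of "m \<otimes> inv (s ?e)" ?e] \<alpha>_mult \<alpha>_inv assms s_e M_carrier
    by (simp add: M_ac inv_mult_group)
qed

lemma extend_aut_bij: "bij_betw (extend_aut \<alpha> \<psi>) (carrier H) (carrier H)"
proof (rule bij_betw_byWitness)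
  define \<beta> where "\<beta> = inv_into M \<alpha>"
  have \<beta>: "\<beta> n \<in> M" "\<alpha> (\<beta> n) = n" if "n \<in> M" for n
    using that bij_betw_apply[OF bij_betw_inv_into[OF \<alpha>_bij]] bij_betw_inv_into_right[OF \<alpha>_bij]
    by (auto simp: \<beta>_def)
  have \<beta>\<alpha>: "\<beta> (\<alpha> m) = m" if "m \<in> M" for m
    using that bij_betw_inv_into_left[OF \<alpha>_bij] by (simp add: \<beta>_def)
  define inv_ext where "inv_ext y = \<beta> (y \<otimes> inv (s (pr y)) \<otimes> inv (\<psi> (pr y))) \<otimes> s (pr y)" for y
  have inv_ext_normal_form: "inv_ext (n \<otimes> s g) = \<beta> (n \<otimes> inv (\<psi> g)) \<otimes> s g"
    if "n \<in> M" "g \<in> carrier G" for n g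
    unfolding inv_ext_def using that normal_form_unique pr_normal_form by simp
  show "\<forall>x\<in>carrier H. inv_ext (extend_aut \<alpha> \<psi> x) = x"
  proof
    fix x assume "x \<in> carrier H"
    then obtain m g where mg: "m \<in> M" "g \<in> carrier G" "x = m \<otimes> s g"
      by (rule normal_formE)
    then have "inv_ext (extend_aut \<alpha> \<psi> x) = \<beta> (\<alpha> m \<otimes> \<psi> g \<otimes> inv (\<psi> g)) \<otimes> s g"
      using extend_aut_normal_form inv_ext_normal_form[of "\<alpha> m \<otimes> \<psi> g" g] by simp
    also have "\<dots> = x"
      using mg \<beta>\<alpha> by (simp add: m_assoc M_carrier)
    finally show "inv_ext (extend_aut \<alpha> \<psi> x) = x" .
  qed
  show "\<forall>y\<in>carrier H. extend_aut \<alpha> \<psi> (inv_ext y) = y"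
  proof
    fix y assume "y \<in> carrier H"
    then obtain n g where ng: "n \<in> M" "g \<in> carrier G" "y = n \<otimes> s g"
      by (rule normal_formE)
    then have "extend_aut \<alpha> \<psi> (inv_ext y) = n \<otimes> inv (\<psi> g) \<otimes> \<psi> g \<otimes> s g"
      using inv_ext_normal_form extend_aut_normal_form \<beta> by simp
    also have "\<dots> = y"
      using ng by (simp add: m_assoc M_carrier)
    finally show "extend_aut \<alpha> \<psi> (inv_ext y) = y" .
  qed
  show "extend_aut \<alpha> \<psi> ` carrier H \<subseteq> carrier H"
    using extend_aut_carrier by blast
  show "inv_ext ` carrier H \<subseteq> carrier H"
    unfolding inv_ext_def using \<beta> normal_form_M s_carrier by (auto simp: M_carrier)
qed

lemma extend_aut_coset:
  assumes "x \<in> carrier H"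
  shows "M #> extend_aut \<alpha> \<psi> x = M #> x"
proof -
  obtain m g where mg: "m \<in> M" "g \<in> carrier G" "x = m \<otimes> s g"
    using assms by (rule normal_formE)
  then have "extend_aut \<alpha> \<psi> x \<otimes> inv x = \<alpha> m \<otimes> \<psi> g \<otimes> inv m"
    using extend_aut_normal_form M_carrier s_carrier by (simp add: m_assoc inv_mult_group)
  then have "extend_aut \<alpha> \<psi> x \<otimes> inv x \<in> M"
    using mg by simp
  then show ?thesis
    using rcos_eq_iff[OF M_subgroup extend_aut_carrier[OF assms] assms] by simp
qed

lemma extend_aut_in_W: "extend_aut \<alpha> \<psi> \<in> W"
proof -
  have "extend_aut \<alpha> \<psi> ` M = \<alpha> ` M"
    using extend_aut_on_M by (simp cong: image_cong)
  also have "\<dots> = M"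
    using \<alpha>_bij by (simp add: bij_betw_def)
  finally show ?thesis
    unfolding W_def iso_def
    using extend_aut_bij extend_aut_coset extend_aut_mult extend_aut_carrier
    by (auto intro: homI)
qed

end

lemma twisted_Aut_extends_to_W:
  assumes "\<alpha> \<in> Aut M_group" "\<And>g m. g \<in> carrier G \<Longrightarrow> m \<in> M \<Longrightarrow> \<alpha> (act g m) = act g (\<alpha> m)"
    and "twists_cocycle \<alpha> \<psi>"
  shows "\<exists>a\<in>W. \<forall>m\<in>M. a m = \<alpha> m"
  using extend_aut_in_W[OF assms] extend_aut_on_M[OF assms] by blast

end

section \<open>The components \<open>W\<^sub>p\<close> and the stabilisers\<close>

context abelian_extension
begin

text \<open>\<open>\<eta>\<^sub>M(W)\<close>, its part \<open>W\<^sub>p\<close> acting on \<open>M\<^sub>p\<close> only, and the centraliser \<open>C\<^sub>p\<close>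
  of the action of \<open>G\<close> on \<open>M\<^sub>p\<close>.\<close>

definition WM :: "('a \<Rightarrow> 'a) set" where
  "WM = (\<lambda>a. restrict a M) ` W"

definition W_at :: "nat \<Rightarrow> ('a \<Rightarrow> 'a) set" where
  "W_at p = {b \<in> WM. \<forall>q\<in>P. q \<noteq> p \<longrightarrow> (\<forall>m\<in>primary_part q. b m = m)}"

definition C_at :: "nat \<Rightarrow> ('a \<Rightarrow> 'a) set" where
  "C_at p = {c \<in> Aut (H\<lparr>carrier := primary_part p\<rparr>).
     \<forall>g\<in>carrier G. \<forall>m\<in>primary_part p. c (act g m) = act g (c m)}"

definition cohomologous_at :: "nat \<Rightarrow> ('g \<Rightarrow> 'g \<Rightarrow> 'a) \<Rightarrow> ('g \<Rightarrow> 'g \<Rightarrow> 'a) \<Rightarrow> bool" where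
  "cohomologous_at p d d' \<longleftrightarrow> (\<exists>\<phi>. \<phi> \<in> carrier G \<rightarrow> primary_part p \<and>
     (\<forall>g\<in>carrier G. \<forall>h\<in>carrier G. d g h = d' g h \<otimes> coboundary \<phi> g h))"

lemma WM_Aut: "\<alpha> \<in> WM \<Longrightarrow> \<alpha> \<in> Aut M_group"
  unfolding WM_def using W_restrict_Aut by blast

lemma restrict_id_in_WM: "restrict (\<lambda>x. x) M \<in> WM"
  unfolding WM_def using id_in_W by blast

lemma WM_comp:
  assumes "\<beta> \<in> WM" "\<gamma> \<in> WM"
  shows "restrict (\<beta> \<circ> \<gamma>) M \<in> WM"
proof -
  obtain b c where b: "b \<in> W" "\<beta> = restrict b M" and c: "c \<in> W" "\<gamma> = restrict c M"
    using assms unfolding WM_def by blast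
  have "restrict (\<beta> \<circ> \<gamma>) M = restrict (b \<circ> c) M"
    using b c W_M by (auto simp: fun_eq_iff)
  then show ?thesis
    unfolding WM_def using W_comp[OF c(1) b(1)] by blast
qed

text \<open>Composing the \<open>b \<in> W\<^sub>q\<close> one prime at a time.\<close>

lemma WM_agreeing_on_parts:
  assumes "finite S" "S \<subseteq> P" and \<alpha>: "\<alpha> \<in> Aut M_group"
    and b: "\<And>q. q \<in> P \<Longrightarrow> b q \<in> W_at q \<and> (\<forall>m\<in>primary_part q. \<alpha> m = b q m)"
  shows "\<exists>\<gamma>\<in>WM. (\<forall>q\<in>S. \<forall>m\<in>primary_part q. \<gamma> m = \<alpha> m) \<and> (\<forall>q\<in>P - S. \<forall>m\<in>primary_part q. \<gamma> m = m)"
  using assms(1,2)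
proof (induction S rule: finite_induct)
  case empty
  show ?case
    by (intro bexI[OF _ restrict_id_in_WM]) (auto dest: primary_part_M)
next
  case (insert p S)
  then obtain \<gamma> where \<gamma>: "\<gamma> \<in> WM" "\<forall>q\<in>S. \<forall>m\<in>primary_part q. \<gamma> m = \<alpha> m"
      "\<forall>q\<in>P - S. \<forall>m\<in>primary_part q. \<gamma> m = m"
    by blast
  have p: "p \<in> P" and bp: "b p \<in> WM" "\<forall>q\<in>P. q \<noteq> p \<longrightarrow> (\<forall>m\<in>primary_part q. b p m = m)"
    using insert b unfolding W_at_def by auto
  have "restrict (b p \<circ> \<gamma>) M m = \<alpha> m" if q: "q \<in> insert p S" and m: "m \<in> primary_part q" for q m
  proof (cases "q = p")
    case True
    then show ?thesis
      using \<gamma>(3) insert.hyps(2) p b[OF p] m primary_part_M by simp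
  next
    case False
    then have "q \<in> S" "q \<in> P"
      using q insert.prems by auto
    moreover have "\<alpha> m \<in> primary_part q"
      using \<alpha> hom_primary_part \<open>q \<in> P\<close> m unfolding Aut_def iso_def by blast
    ultimately show ?thesis
      using \<gamma>(2) bp(2) False m primary_part_M by simp
  qed
  then have "\<forall>q\<in>insert p S. \<forall>m\<in>primary_part q. restrict (b p \<circ> \<gamma>) M m = \<alpha> m"
    by blast
  moreover have "\<forall>q\<in>P - insert p S. \<forall>m\<in>primary_part q. restrict (b p \<circ> \<gamma>) M m = m"
    using \<gamma> bp primary_part_M by auto
  ultimately show ?case
    using WM_comp[OF bp(1) \<gamma>(1)] by blast
qed

lemma WM_from_components:
  assumes \<alpha>: "\<alpha> \<in> Aut M_group" and b: "\<forall>p\<in>P. \<exists>b\<in>W_at p. \<forall>m\<in>primary_part p. \<alpha> m = b m"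
  shows "\<alpha> \<in> WM"
proof -
  obtain b where "\<And>q. q \<in> P \<Longrightarrow> b q \<in> W_at q \<and> (\<forall>m\<in>primary_part q. \<alpha> m = b q m)"
    using b by metis
  from WM_agreeing_on_parts[OF finite_P subset_refl \<alpha> this]
  obtain \<gamma> where \<gamma>: "\<gamma> \<in> WM" "\<forall>q\<in>P. \<forall>m\<in>primary_part q. \<gamma> m = \<alpha> m"
    by auto
  have "\<alpha> m = \<gamma> m" if "m \<in> M" for m
    using hom_eq_on_primary_parts[of \<alpha> \<gamma>] \<alpha> WM_Aut[OF \<gamma>(1)] \<gamma>(2) that
    unfolding Aut_def iso_def by auto
  moreover have "\<alpha> \<in> extensional M" "\<gamma> \<in> extensional M"
    using \<alpha> WM_Aut[OF \<gamma>(1)] unfolding Aut_def by auto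
  ultimately have "\<alpha> = \<gamma>"
    by (metis extensionalityI)
  then show ?thesis
    using \<gamma>(1) by simp
qed

end

context abelian_extension_cocycle
begin

text \<open>The stabiliser in \<open>C\<^sub>p\<close> of the class of the \<open>p\<close>-component of \<open>eps\<close>.\<close>

definition stab :: "nat \<Rightarrow> ('a \<Rightarrow> 'a) set" where
  "stab p = {c \<in> C_at p.
     cohomologous_at p (\<lambda>g h. c (primary_proj p (eps g h))) (\<lambda>g h. primary_proj p (eps g h))}"

lemma restrict_WM_in_stab:
  assumes "\<alpha> \<in> WM" "p \<in> P"
  shows "restrict \<alpha> (primary_part p) \<in> stab p"
proof -
  obtain a where a: "a \<in> W" and \<alpha>: "\<alpha> = restrict a M"
    using assms(1) unfolding WM_def by blast
  have part_M: "\<And>m. m \<in> primary_part p \<Longrightarrow> m \<in> M"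
    using primary_part_M by blast
  have c: "restrict \<alpha> (primary_part p) = restrict a (primary_part p)"
    using \<alpha> part_M by (auto simp: fun_eq_iff)
  have "restrict a (primary_part p) \<in> C_at p"
    unfolding C_at_def
    using Aut_restrict_primary_part[OF W_restrict_Aut[OF a] assms(2)] c \<alpha>
      W_act[OF a] act_primary_part[OF assms(2)] part_M
    by simp
  moreover define \<psi> where "\<psi> g = a (s g) \<otimes> inv (s g)" for g
  have twist: "twists_cocycle a \<psi>"
    unfolding \<psi>_def using W_twists_cocycle[OF a] .
  then have \<psi>: "\<psi> \<in> carrier G \<rightarrow> M" "\<And>g h. g \<in> carrier G \<Longrightarrow> h \<in> carrier G \<Longrightarrow>
      a (eps g h) = eps g h \<otimes> coboundary \<psi> g h"
    unfolding twists_cocycle_def by auto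
  have "restrict a (primary_part p) (primary_proj p (eps g h)) =
      primary_proj p (eps g h) \<otimes> coboundary (\<lambda>g. primary_proj p (\<psi> g)) g h"
    if "g \<in> carrier G" "h \<in> carrier G" for g h
    using that \<psi> W_primary_proj[OF a] primary_proj_primary_part[OF assms(2)]
      primary_proj_mult primary_proj_coboundary coboundary_M by simp
  then have "cohomologous_at p (\<lambda>g h. restrict a (primary_part p) (primary_proj p (eps g h)))
      (\<lambda>g h. primary_proj p (eps g h))"
    unfolding cohomologous_at_def using \<psi>(1) primary_proj_primary_part[OF assms(2)]
    by (intro exI[of _ "\<lambda>g. primary_proj p (\<psi> g)"]) auto
  ultimately show ?thesis
    unfolding stab_def c by simp
qed

text \<open>An automorphism \<open>c\<close> of \<open>M\<^sub>p\<close> extended by the identity on the other primary parts.\<close>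

definition extend_component :: "nat \<Rightarrow> ('a \<Rightarrow> 'a) \<Rightarrow> 'a \<Rightarrow> 'a" where
  "extend_component p c = (\<lambda>m\<in>M. c (primary_proj p m) \<otimes> m \<otimes> inv (primary_proj p m))"

context
  fixes p :: nat and c :: "'a \<Rightarrow> 'a"
  assumes p: "p \<in> P" and c: "c \<in> Aut (H\<lparr>carrier := primary_part p\<rparr>)"
begin

private lemma c_hom: "c \<in> hom (H\<lparr>carrier := primary_part p\<rparr>) (H\<lparr>carrier := primary_part p\<rparr>)"
  and c_bij: "bij_betw c (primary_part p) (primary_part p)"
  using c unfolding Aut_def iso_def by auto

private lemma c_part [simp]: "m \<in> primary_part p \<Longrightarrow> c m \<in> primary_part p"
  using hom_in_carrier[OF c_hom] by simp

private lemma c_mult: "x \<in> primary_part p \<Longrightarrow> y \<in> primary_part p \<Longrightarrow> c (x \<otimes> y) = c x \<otimes> c y"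
  using hom_mult[OF c_hom] by simp

private lemma part_M [simp]: "m \<in> primary_part p \<Longrightarrow> m \<in> M"
  using primary_part_M .

private lemma proj_part [simp]: "m \<in> M \<Longrightarrow> primary_proj p m \<in> primary_part p"
  using primary_proj_primary_part[OF p] .

private lemma proj_idem [simp]: "m \<in> primary_part p \<Longrightarrow> primary_proj p m = m"
  using primary_proj_idem[OF p] .

lemma extend_component_split:
  "m \<in> M \<Longrightarrow> extend_component p c m = c (primary_proj p m) \<otimes> (m \<otimes> inv (primary_proj p m))"
  unfolding extend_component_def by (simp add: m_assoc M_carrier)

lemma extend_component_M [simp]: "m \<in> M \<Longrightarrow> extend_component p c m \<in> M"
  using extend_component_split by simp

lemma primary_proj_extend_component:
  "m \<in> M \<Longrightarrow> primary_proj p (extend_component p c m) = c (primary_proj p m)"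
  using extend_component_split primary_proj_mult primary_proj_inv by (simp add: M_carrier)

lemma extend_component_on_part: "m \<in> primary_part p \<Longrightarrow> extend_component p c m = c m"
  using extend_component_split by (simp add: m_assoc M_carrier)

lemma extend_component_fixes:
  assumes "q \<in> P" "q \<noteq> p" "m \<in> primary_part q"
  shows "extend_component p c m = m"
proof -
  have "primary_proj p m = \<one>"
    using primary_proj_on_primary_part[OF assms(1) p assms(3)] assms(2) by simp
  moreover have "c \<one> = \<one>"
    using hom_one[OF c_hom] subgroup_imp_group[OF primary_part_subgroup[OF p]] by simp
  ultimately show ?thesis
    using extend_component_split primary_part_M[OF assms(3)] by (simp add: M_carrier)
qed

lemma extend_component_hom: "extend_component p c \<in> hom M_group M_group"
proof (rule homI)
  fix x y assume "x \<in> carrier M_group" "y \<in> carrier M_group"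
  then have xy: "x \<in> M" "y \<in> M"
    by simp_all
  then show "extend_component p c (x \<otimes>\<^bsub>M_group\<^esub> y) =
      extend_component p c x \<otimes>\<^bsub>M_group\<^esub> extend_component p c y"
    using extend_component_split c_mult primary_proj_mult
    by (simp add: inv_mult_group M_carrier) (simp add: M_ac)
qed simp

lemma inj_on_extend_component: "inj_on (extend_component p c) M"
proof (rule inj_onI)
  fix x y assume xy: "x \<in> M" "y \<in> M" and eq: "extend_component p c x = extend_component p c y"
  then have "c (primary_proj p x) = c (primary_proj p y)"
    using primary_proj_extend_component by metis
  then have "primary_proj p x = primary_proj p y"
    using inj_onD[OF bij_betw_imp_inj_on[OF c_bij]] xy by simp
  then show "x = y"
    using eq xy extend_component_split by (simp add: M_carrier)
qed

lemma extend_component_surj: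
  assumes n: "n \<in> M"
  shows "n \<in> extend_component p c ` M"
proof -
  obtain u where u: "u \<in> primary_part p" "c u = primary_proj p n"
    using bij_betw_imp_surj_on[OF c_bij] n by (metis imageE proj_part)
  define r where "r = n \<otimes> inv (primary_proj p n)"
  have r: "r \<in> M" "primary_proj p r = \<one>"
    using n primary_proj_mult primary_proj_inv by (simp_all add: r_def M_carrier)
  have "primary_proj p (u \<otimes> r) = u"
    using u r primary_proj_mult by (simp add: M_carrier)
  then have "extend_component p c (u \<otimes> r) = c u \<otimes> (u \<otimes> r \<otimes> inv u)"
    using extend_component_split u r by simp
  also have "\<dots> = primary_proj p n \<otimes> r"
    using M_conj u r by simp
  also have "\<dots> = n"
    using n by (simp add: r_def M_ac)
  finally show ?thesis
    using u r by (metis M_mult part_M image_eqI)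
qed

lemma extend_component_Aut: "extend_component p c \<in> Aut M_group"
proof -
  have "bij_betw (extend_component p c) M M"
    using inj_on_extend_component extend_component_surj hom_in_carrier[OF extend_component_hom]
    by (auto simp: bij_betw_def)
  moreover have "extend_component p c \<in> extensional M"
    by (simp add: extend_component_def)
  ultimately show ?thesis
    unfolding Aut_def iso_def using extend_component_hom by simp
qed

lemma extend_component_act:
  assumes "\<And>g m. g \<in> carrier G \<Longrightarrow> m \<in> primary_part p \<Longrightarrow> c (act g m) = act g (c m)"
    and "g \<in> carrier G" "m \<in> M"
  shows "extend_component p c (act g m) = act g (extend_component p c m)"
  using assms extend_component_split primary_proj_act act_mult act_inv by simp

lemma extend_component_twists:
  assumes "cohomologous_at p (\<lambda>g h. c (primary_proj p (eps g h))) (\<lambda>g h. primary_proj p (eps g h))"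
  shows "\<exists>\<phi>. twists_cocycle (extend_component p c) \<phi>"
proof -
  obtain \<phi> where \<phi>: "\<phi> \<in> carrier G \<rightarrow> primary_part p"
    and c_eps: "\<And>g h. g \<in> carrier G \<Longrightarrow> h \<in> carrier G \<Longrightarrow>
      c (primary_proj p (eps g h)) = primary_proj p (eps g h) \<otimes> coboundary \<phi> g h"
    using assms unfolding cohomologous_at_def by blast
  have \<phi>_M: "\<phi> \<in> carrier G \<rightarrow> M"
    using \<phi> by (auto simp: Pi_iff)
  have "extend_component p c (eps g h) = eps g h \<otimes> coboundary \<phi> g h"
    if "g \<in> carrier G" "h \<in> carrier G" for g h
  proof -
    let ?e = "primary_proj p (eps g h)"
    have X: "coboundary \<phi> g h \<in> M" "?e \<in> M" "eps g h \<in> M"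
      using coboundary_M[OF that \<phi>_M] that by simp_all
    have "extend_component p c (eps g h) = ?e \<otimes> (coboundary \<phi> g h \<otimes> eps g h) \<otimes> inv ?e"
      using extend_component_split that c_eps X by (simp add: m_assoc M_carrier)
    also have "\<dots> = eps g h \<otimes> coboundary \<phi> g h"
      using M_conj X M_comm by simp
    finally show ?thesis .
  qed
  then show ?thesis
    unfolding twists_cocycle_def using \<phi>_M by blast
qed

end

lemma stab_extends_to_W_at:
  assumes c: "c \<in> stab p" and p: "p \<in> P"
  shows "\<exists>b\<in>W_at p. restrict b (primary_part p) = c"
proof -
  have c_Aut: "c \<in> Aut (H\<lparr>carrier := primary_part p\<rparr>)"
    and c_act: "\<And>g m. g \<in> carrier G \<Longrightarrow> m \<in> primary_part p \<Longrightarrow> c (act g m) = act g (c m)"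
    and c_coh: "cohomologous_at p (\<lambda>g h. c (primary_proj p (eps g h))) (\<lambda>g h. primary_proj p (eps g h))"
    using c unfolding stab_def C_at_def by auto
  obtain \<phi> where "twists_cocycle (extend_component p c) \<phi>"
    using extend_component_twists[OF p c_Aut c_coh] by blast
  then obtain a where a: "a \<in> W" and a_M: "\<And>m. m \<in> M \<Longrightarrow> a m = extend_component p c m"
    using twisted_Aut_extends_to_W extend_component_Aut[OF p c_Aut]
      extend_component_act[OF p c_Aut c_act] by metis
  have "restrict a M \<in> W_at p"
    unfolding W_at_def WM_def
    using a a_M extend_component_fixes[OF p c_Aut] primary_part_M by auto
  moreover have "restrict (restrict a M) (primary_part p) = c"
  proof
    fix m
    show "restrict (restrict a M) (primary_part p) m = c m"
    proof (cases "m \<in> primary_part p")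
      case True
      then show ?thesis
        using a_M extend_component_on_part[OF p c_Aut] primary_part_M by simp
    next
      case False
      then show ?thesis
        using c_Aut by (simp add: Aut_def extensional_def)
    qed
  qed
  ultimately show ?thesis
    by blast
qed

theorem WM_eq_components:
  "WM = {\<alpha> \<in> Aut M_group. \<forall>p\<in>P. \<exists>b\<in>W_at p. \<forall>m\<in>primary_part p. \<alpha> m = b m}"
proof (intro equalityI subsetI CollectI conjI ballI)
  fix \<alpha> p assume \<alpha>: "\<alpha> \<in> WM" and p: "p \<in> P"
  then obtain b where "b \<in> W_at p" "restrict b (primary_part p) = restrict \<alpha> (primary_part p)"
    using stab_extends_to_W_at[OF restrict_WM_in_stab] by blast
  then show "\<exists>b\<in>W_at p. \<forall>m\<in>primary_part p. \<alpha> m = b m"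
    by (metis restrict_apply')
qed (use WM_Aut WM_from_components in auto)

theorem W_at_restrict_eq_stab:
  assumes "p \<in> P"
  shows "(\<lambda>b. restrict b (primary_part p)) ` W_at p = stab p"
  using restrict_WM_in_stab[OF _ assms] stab_extends_to_W_at[OF _ assms]
  unfolding W_at_def by blast

end

section \<open>The extension \<open>G* = F/[R,L]R\<^sup>k\<close>\<close>

lemma (in group_hom) normal_vimage:
  assumes "N \<lhd> H"
  shows "{x \<in> carrier G. h x \<in> N} \<lhd> G"
proof (rule G.normal_invI)
  have N: "subgroup N H"
    using normal_imp_subgroup[OF assms] .
  show "subgroup {x \<in> carrier G. h x \<in> N} G"
  proof (rule G.subgroupI)
    show "{x \<in> carrier G. h x \<in> N} \<noteq> {}"
      using subgroup.one_closed[OF N] by force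
  qed (use subgroup.m_inv_closed[OF N] subgroup.m_closed[OF N] in auto)
  fix x y assume "x \<in> carrier G" "y \<in> {x \<in> carrier G. h x \<in> N}"
  then show "x \<otimes>\<^bsub>G\<^esub> y \<otimes>\<^bsub>G\<^esub> inv\<^bsub>G\<^esub> x \<in> {x \<in> carrier G. h x \<in> N}"
    using normal.inv_op_closed2[OF assms] by simp
qed

lemma (in group) comm_sub_normal:
  assumes "A \<lhd> G" "B \<lhd> G"
  shows "comm_sub G A B \<lhd> G"
  unfolding comm_sub_def
proof (rule normal_generateI)
  have A: "A \<subseteq> carrier G" and B: "B \<subseteq> carrier G"
    using subgroup.subset normal_imp_subgroup assms by auto
  then show "{inv a \<otimes> inv b \<otimes> a \<otimes> b | a b. a \<in> A \<and> b \<in> B} \<subseteq> carrier G"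
    by (auto simp: subset_iff)
  fix x g assume "x \<in> {inv a \<otimes> inv b \<otimes> a \<otimes> b | a b. a \<in> A \<and> b \<in> B}" and g: "g \<in> carrier G"
  then obtain a b where ab: "a \<in> A" "b \<in> B" "x = inv a \<otimes> inv b \<otimes> a \<otimes> b"
    by blast
  have "a \<in> carrier G" "b \<in> carrier G"
    using ab A B by (auto simp: subset_iff)
  then have "g \<otimes> x \<otimes> inv g =
      inv (g \<otimes> a \<otimes> inv g) \<otimes> inv (g \<otimes> b \<otimes> inv g) \<otimes> (g \<otimes> a \<otimes> inv g) \<otimes> (g \<otimes> b \<otimes> inv g)"
    using ab(3) g by (simp add: m_assoc inv_mult_group)
  moreover have "g \<otimes> a \<otimes> inv g \<in> A" "g \<otimes> b \<otimes> inv g \<in> B"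
    using normal.inv_op_closed2[OF assms(1) g ab(1)] normal.inv_op_closed2[OF assms(2) g ab(2)] .
  ultimately show "g \<otimes> x \<otimes> inv g \<in> {inv a \<otimes> inv b \<otimes> a \<otimes> b | a b. a \<in> A \<and> b \<in> B}"
    by blast
qed

lemma (in group) comm_sub_subset:
  assumes "A \<lhd> G" "B \<subseteq> carrier G"
  shows "comm_sub G A B \<subseteq> A"
  unfolding comm_sub_def
proof (rule generate_subgroup_incl[OF _ normal_imp_subgroup[OF assms(1)]])
  show "{inv a \<otimes> inv b \<otimes> a \<otimes> b | a b. a \<in> A \<and> b \<in> B} \<subseteq> A"
  proof
    fix x assume "x \<in> {inv a \<otimes> inv b \<otimes> a \<otimes> b | a b. a \<in> A \<and> b \<in> B}"
    then obtain a b where ab: "a \<in> A" "b \<in> B" "x = inv a \<otimes> inv b \<otimes> a \<otimes> b"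
      by blast
    have b: "b \<in> carrier G"
      using ab assms(2) by blast
    have "inv a \<otimes> (inv b \<otimes> a \<otimes> b) \<in> A"
      using normal.inv_op_closed1[OF assms(1) b ab(1)] ab(1)
        subgroup.m_closed[OF normal_imp_subgroup[OF assms(1)]]
        subgroup.m_inv_closed[OF normal_imp_subgroup[OF assms(1)]] by blast
    then show "x \<in> A"
      using ab b subgroup.mem_carrier[OF normal_imp_subgroup[OF assms(1)] ab(1)] by (simp add: m_assoc)
  qed
qed

lemma (in group) conj_nat_pow:
  assumes "g \<in> carrier G" "x \<in> carrier G"
  shows "g \<otimes> x [^] (n::nat) \<otimes> inv g = (g \<otimes> x \<otimes> inv g) [^] n"
proof (induction n)
  case (Suc n)
  have "g \<otimes> x [^] Suc n \<otimes> inv g = (g \<otimes> x [^] n \<otimes> inv g) \<otimes> (g \<otimes> x \<otimes> inv g)"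
    using assms by (simp add: m_assoc)
  then show ?case
    using Suc by simp
qed (use assms in simp)

lemma (in group) power_subgroup_normal:
  assumes "A \<lhd> G"
  shows "generate G {x [^] (k::nat) | x. x \<in> A} \<lhd> G"
proof (rule normal_generateI)
  have A: "A \<subseteq> carrier G"
    using assms normal_imp_subgroup subgroup.subset by blast
  then show "{x [^] k | x. x \<in> A} \<subseteq> carrier G"
    by auto
  fix y g assume "y \<in> {x [^] k | x. x \<in> A}" and g: "g \<in> carrier G"
  then obtain x where x: "x \<in> A" "y = x [^] k"
    by blast
  have "x \<in> carrier G"
    using x(1) A by blast
  then have "g \<otimes> y \<otimes> inv g = (g \<otimes> x \<otimes> inv g) [^] k"
    using conj_nat_pow[OF g] x(2) by simp
  moreover have "g \<otimes> x \<otimes> inv g \<in> A"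
    using normal.inv_op_closed2[OF assms g x(1)] .
  ultimately show "g \<otimes> y \<otimes> inv g \<in> {x [^] k | x. x \<in> A}"
    by blast
qed

lemma (in group) power_subgroup_subset:
  assumes "subgroup A G"
  shows "generate G {x [^] (k::nat) | x. x \<in> A} \<subseteq> A"
proof (rule generate_subgroup_incl[OF _ assms])
  have "x [^] n \<in> A" if "x \<in> A" for x and n :: nat
    using that by (induction n) (simp_all add: subgroup.one_closed[OF assms] subgroup.m_closed[OF assms])
  then show "{x [^] k | x. x \<in> A} \<subseteq> A"
    by blast
qed

lemma fitting_normal:
  assumes "group G"
  shows "fitting G \<lhd> G"
  unfolding fitting_def
proof (rule group.normal_generateI[OF assms])
  let ?U = "\<Union>{N. N \<lhd> G \<and> nilpotent_group (G\<lparr>carrier := N\<rparr>)}"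
  show "?U \<subseteq> carrier G"
  proof
    fix h assume "h \<in> ?U"
    then obtain K where "K \<lhd> G" "h \<in> K"
      by blast
    then show "h \<in> carrier G"
      using subgroup.mem_carrier[OF normal_imp_subgroup] by metis
  qed
  fix h g assume "h \<in> ?U" and g: "g \<in> carrier G"
  then obtain K where K: "K \<lhd> G" "nilpotent_group (G\<lparr>carrier := K\<rparr>)" "h \<in> K"
    by blast
  then have "g \<otimes>\<^bsub>G\<^esub> h \<otimes>\<^bsub>G\<^esub> inv\<^bsub>G\<^esub> g \<in> K"
    using normal.inv_op_closed2[OF K(1) g K(3)] by simp
  then show "g \<otimes>\<^bsub>G\<^esub> h \<otimes>\<^bsub>G\<^esub> inv\<^bsub>G\<^esub> g \<in> ?U"
    using K(1,2) by blast
qed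

text \<open>Every prime divides \<open>0\<close>, so the finiteness of \<open>F_primes G\<close> rests on \<open>F_rank G \<noteq> 0\<close>.\<close>

lemma F_rank_pos:
  assumes "group G" "finite (carrier G)"
  shows "F_rank G > 0"
proof -
  let ?X = "G\<lparr>carrier := fitting G\<rparr>"
  have sub: "subgroup (fitting G) G"
    using normal_imp_subgroup[OF fitting_normal[OF assms(1)]] .
  have fin: "finite (fitting G)"
    using subgroup.subset[OF sub] assms(2) finite_subset by blast
  have frattini_sub: "frattini ?X \<subseteq> fitting G"
    unfolding frattini_def by auto
  have "\<one>\<^bsub>G\<^esub> \<in> frattini ?X"
    using subgroup.one_closed[OF sub] subgroup.one_closed[of _ ?X]
    unfolding frattini_def maximal_subgroup_def by auto
  then have "card (frattini ?X) > 0"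
    using frattini_sub fin finite_subset card_gt_0_iff by blast
  moreover have "card (frattini ?X) \<le> card (fitting G)"
    using frattini_sub fin card_mono by blast
  ultimately show ?thesis
    unfolding F_rank_def by (simp add: div_greater_zero_iff)
qed

lemma finite_F_primes:
  assumes "group G" "finite (carrier G)"
  shows "finite (F_primes G)"
proof -
  have "F_primes G \<subseteq> {d. d dvd F_rank G}"
    unfolding F_primes_def by blast
  then show ?thesis
    using finite_divisors_nat[OF F_rank_pos[OF assms]] finite_subset by blast
qed

locale Gstar_setting = group F
  for F :: "'f monoid" (structure) +
  fixes G :: "'g monoid" and mu :: "'f \<Rightarrow> 'g"
  assumes group_G: "group G" and finite_G: "finite (carrier G)"
    and mu_hom: "mu \<in> hom F G" and mu_surj: "mu ` carrier F = carrier G"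
begin

sublocale G: group G
  by (fact group_G)

sublocale mu: group_hom F G mu
  by (simp add: group_hom_def group_hom_axioms_def is_group group_G mu_hom)

abbreviation "R \<equiv> Rsub F G mu"
abbreviation "N \<equiv> Nsub F G mu"

lemma R_normal: "R \<lhd> F"
  unfolding Rsub_def by (rule mu.normal_kernel)

lemma R_subgroup: "subgroup R F"
  using normal_imp_subgroup[OF R_normal] .

lemma R_iff: "x \<in> carrier F \<Longrightarrow> x \<in> R \<longleftrightarrow> mu x = \<one>\<^bsub>G\<^esub>"
  unfolding Rsub_def kernel_def by simp

lemma R_subset_L: "R \<subseteq> Lsub F G mu"
  unfolding Lsub_def Rsub_def kernel_def
  using subgroup.one_closed[OF normal_imp_subgroup[OF fitting_normal[OF group_G]]] by auto

lemma N_eq: "N = comm_sub F R (Lsub F G mu) <#> generate F {x [^] k_of G | x. x \<in> R}"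
  unfolding Nsub_def ..

lemma N_normal: "N \<lhd> F"
proof -
  have "Lsub F G mu \<lhd> F"
    unfolding Lsub_def using mu.normal_vimage[OF fitting_normal[OF group_G]] .
  then show ?thesis
    unfolding N_eq
    using normal_subgroup_set_mult_closed comm_sub_normal R_normal power_subgroup_normal by blast
qed

lemma N_subgroup: "subgroup N F"
  using normal_imp_subgroup[OF N_normal] .

lemma N_subset_R: "N \<subseteq> R"
proof
  fix x assume "x \<in> N"
  then obtain c y where "c \<in> comm_sub F R (Lsub F G mu)" "y \<in> generate F {x [^] k_of G | x. x \<in> R}" "x = c \<otimes> y"
    unfolding N_eq set_mult_def by blast
  moreover have "Lsub F G mu \<subseteq> carrier F"
    unfolding Lsub_def by blast
  ultimately show "x \<in> R"
    using comm_sub_subset[OF R_normal] power_subgroup_subset[OF R_subgroup]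
      subgroup.m_closed[OF R_subgroup] by blast
qed

lemma comm_sub_subset_N: "comm_sub F R (Lsub F G mu) \<subseteq> N"
proof
  fix c assume c: "c \<in> comm_sub F R (Lsub F G mu)"
  have "\<one> \<in> generate F {x [^] k_of G | x. x \<in> R}"
    by (rule generate.one)
  then have "c \<otimes> \<one> \<in> N"
    unfolding N_eq set_mult_def using c by blast
  moreover have "c \<in> R"
    using c comm_sub_subset[OF R_normal, of "Lsub F G mu"] unfolding Lsub_def by blast
  ultimately show "c \<in> N"
    using subgroup.mem_carrier[OF R_subgroup] by simp
qed

lemma power_subset_N:
  assumes "x \<in> R"
  shows "x [^] k_of G \<in> N"
proof -
  have "\<one> \<in> comm_sub F R (Lsub F G mu)"
    unfolding comm_sub_def by (rule generate.one)
  moreover have "x [^] k_of G \<in> generate F {x [^] k_of G | x. x \<in> R}"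
    using assms by (intro generate.incl) blast
  ultimately have "\<one> \<otimes> x [^] k_of G \<in> N"
    unfolding N_eq set_mult_def by blast
  then show ?thesis
    using subgroup.mem_carrier[OF R_subgroup assms] by simp
qed

sublocale Gstar: group "Gstar F G mu"
  unfolding Gstar_def using normal.factorgroup_is_group[OF N_normal] .

lemma Gstar_carrier: "carrier (Gstar F G mu) = (\<lambda>x. N #> x) ` carrier F"
  unfolding Gstar_def by (rule carrier_FactGroup)

lemma Gstar_mult: "x \<in> carrier F \<Longrightarrow> y \<in> carrier F \<Longrightarrow> (N #> x) \<otimes>\<^bsub>Gstar F G mu\<^esub> (N #> y) = N #> (x \<otimes> y)"
  unfolding Gstar_def using normal.rcos_sum[OF N_normal] by simp

lemma Gstar_one: "\<one>\<^bsub>Gstar F G mu\<^esub> = N #> \<one>"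
  unfolding Gstar_def using subgroup.subset[OF N_subgroup] by simp

lemma Gstar_pow: "x \<in> carrier F \<Longrightarrow> (N #> x) [^]\<^bsub>Gstar F G mu\<^esub> (n::nat) = N #> (x [^] n)"
  unfolding Gstar_def using normal.FactGroup_pow[OF N_normal] by simp

lemma coset_eq_iff: "x \<in> carrier F \<Longrightarrow> y \<in> carrier F \<Longrightarrow> N #> x = N #> y \<longleftrightarrow> x \<otimes> inv y \<in> N"
  using rcos_eq_iff[OF N_subgroup] .

definition mu_bar :: "'f set \<Rightarrow> 'g" where
  "mu_bar X = the_elem (mu ` X)"

definition lift :: "'g \<Rightarrow> 'f set" where
  "lift g = N #> (SOME w. w \<in> carrier F \<and> mu w = g)"

lemma mu_bar_coset:
  assumes "x \<in> carrier F"
  shows "mu_bar (N #> x) = mu x"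
proof -
  have "mu ` (N #> x) = {mu x}"
    using assms N_subset_R R_iff subgroup.mem_carrier[OF N_subgroup] rcos_self[OF assms N_subgroup]
    by (auto simp: r_coset_def)
  then show ?thesis
    unfolding mu_bar_def by simp
qed

lemma mu_bar_hom: "mu_bar \<in> hom (Gstar F G mu) G"
  by (rule homI) (auto simp: Gstar_carrier Gstar_mult mu_bar_coset)

lemma Mset_eq_kernel:
  assumes "X \<in> carrier (Gstar F G mu)"
  shows "mu_bar X = \<one>\<^bsub>G\<^esub> \<longleftrightarrow> X \<in> Mset F G mu"
proof
  obtain x where x: "x \<in> carrier F" "X = N #> x"
    using assms Gstar_carrier by auto
  assume "mu_bar X = \<one>\<^bsub>G\<^esub>"
  then have "x \<in> R"
    using x mu_bar_coset R_iff by simp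
  then show "X \<in> Mset F G mu"
    unfolding Mset_def using x by blast
next
  assume "X \<in> Mset F G mu"
  then obtain r where "r \<in> R" "X = N #> r"
    unfolding Mset_def by blast
  then show "mu_bar X = \<one>\<^bsub>G\<^esub>"
    using mu_bar_coset R_iff[of r] subgroup.mem_carrier[OF R_subgroup] by simp
qed

lemma lift: "g \<in> carrier G \<Longrightarrow> lift g \<in> carrier (Gstar F G mu) \<and> mu_bar (lift g) = g"
proof -
  assume "g \<in> carrier G"
  then have "\<exists>w. w \<in> carrier F \<and> mu w = g"
    using mu_surj by (metis imageE)
  then show ?thesis
    unfolding lift_def using someI_ex[of "\<lambda>w. w \<in> carrier F \<and> mu w = g"]
    by (auto simp: Gstar_carrier mu_bar_coset)
qed

lemma Mset_subgroup: "subgroup (Mset F G mu) (Gstar F G mu)"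
proof -
  have "Mset F G mu = kernel (Gstar F G mu) G mu_bar"
    unfolding kernel_def using Mset_eq_kernel by (auto simp: Mset_def Gstar_carrier subgroup.mem_carrier[OF R_subgroup])
  then show ?thesis
    using group_hom.subgroup_kernel[of "Gstar F G mu" G mu_bar] mu_bar_hom group_G Gstar.is_group
    by (simp add: group_hom_def group_hom_axioms_def)
qed

text \<open>\<open>M\<close> is abelian because \<open>[R, R] \<subseteq> [R, L]\<close>, and of exponent \<open>k\<close> because \<open>R\<^sup>k \<subseteq> N\<close>.\<close>

lemma Mset_comm:
  assumes "X \<in> Mset F G mu" "Y \<in> Mset F G mu"
  shows "X \<otimes>\<^bsub>Gstar F G mu\<^esub> Y = Y \<otimes>\<^bsub>Gstar F G mu\<^esub> X"
proof -
  obtain x y where xy: "x \<in> R" "X = N #> x" "y \<in> R" "Y = N #> y"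
    using assms unfolding Mset_def by blast
  have c: "x \<in> carrier F" "y \<in> carrier F"
    using xy subgroup.mem_carrier[OF R_subgroup] by auto
  have "inv (inv x) \<otimes> inv (inv y) \<otimes> inv x \<otimes> inv y \<in> comm_sub F R (Lsub F G mu)"
    unfolding comm_sub_def
    by (rule generate.incl) (use xy R_subset_L subgroup.m_inv_closed[OF R_subgroup] in blast)
  then have "x \<otimes> y \<otimes> inv (y \<otimes> x) \<in> N"
    using comm_sub_subset_N c by (auto simp: m_assoc inv_mult_group)
  then show ?thesis
    using xy c coset_eq_iff Gstar_mult by simp
qed

lemma Mset_exponent:
  assumes "X \<in> Mset F G mu"
  shows "X [^]\<^bsub>Gstar F G mu\<^esub> \<Prod>(F_primes G) = \<one>\<^bsub>Gstar F G mu\<^esub>"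
proof -
  obtain x where x: "x \<in> R" "X = N #> x"
    using assms unfolding Mset_def by blast
  then have "x \<in> carrier F"
    using subgroup.mem_carrier[OF R_subgroup] by blast
  then show ?thesis
    using x power_subset_N coset_eq_iff Gstar_pow Gstar_one unfolding k_of_def by simp
qed

sublocale abelian_extension "Gstar F G mu" "Mset F G mu" "F_primes G" G mu_bar lift
proof -
  have "\<And>p. p \<in> F_primes G \<Longrightarrow> prime p"
    unfolding F_primes_def by simp
  then show "abelian_extension (Gstar F G mu) (Mset F G mu) (F_primes G) G mu_bar lift"
    unfolding abelian_extension_def abelian_extension_axioms_def
      squarefree_exponent_subgroup_def squarefree_exponent_subgroup_axioms_def
    using Gstar.is_group group_G Mset_subgroup Mset_comm finite_F_primes[OF group_G finite_G]
      Mset_exponent mu_bar_hom Mset_eq_kernel lift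
    by blast
qed

lemma Msyl_eq: "Msyl F G mu p = primary_part p"
  unfolding Msyl_def primary_part_def ..

lemma gact_eq: "gact F G mu = act"
  unfolding gact_def act_def by (simp add: fun_eq_iff lift_def Let_def)

lemma etaM_W_eq: "etaM_W F G mu = WM"
  unfolding etaM_W_def WM_def Wker_def AutM_Gstar_def W_def by (simp add: conj_assoc)

lemma Wp_eq: "Wp F G mu p = W_at p"
  unfolding Wp_def W_at_def etaM_W_eq Msyl_eq ..

lemma Cp_eq: "Cp F G mu p = C_at p"
  unfolding Cp_def C_at_def Msyl_eq gact_eq ..

lemma cohomologous_eq:
  assumes "\<And>g h. g \<in> carrier G \<Longrightarrow> h \<in> carrier G \<Longrightarrow> d g h = e g h \<and> d' g h = e' g h \<and> e' g h \<in> Mset F G mu"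
  shows "cohomologous F G mu p d d' \<longleftrightarrow> cohomologous_at p e e'"
proof -
  have "d' g h \<otimes>\<^bsub>Gstar F G mu\<^esub> act g (\<phi> h) \<otimes>\<^bsub>Gstar F G mu\<^esub> inv\<^bsub>Gstar F G mu\<^esub> (\<phi> (g \<otimes>\<^bsub>G\<^esub> h))
      \<otimes>\<^bsub>Gstar F G mu\<^esub> \<phi> g = e' g h \<otimes>\<^bsub>Gstar F G mu\<^esub> coboundary \<phi> g h"
    if "g \<in> carrier G" "h \<in> carrier G" "\<phi> \<in> carrier G \<rightarrow> primary_part p" for g h \<phi>
  proof -
    have "\<phi> g \<in> Mset F G mu" "\<phi> h \<in> Mset F G mu" "\<phi> (g \<otimes>\<^bsub>G\<^esub> h) \<in> Mset F G mu"
      using that primary_part_M by (auto simp: Pi_iff)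
    then show ?thesis
      unfolding coboundary_def using that assms by (simp add: Gstar.m_assoc M_carrier)
  qed
  then show ?thesis
    unfolding cohomologous_def cohomologous_at_def Msyl_eq gact_eq Pi_iff[symmetric] using assms
    by (intro ex_cong1 conj_cong refl) auto
qed

end

theorem lemma4p3:
  fixes F :: "'f monoid" and G :: "'g monoid" and f :: "nat \<Rightarrow> 'f" and n :: nat
    and mu :: "'f \<Rightarrow> 'g"
    and eps :: "'g \<Rightarrow> 'g \<Rightarrow> 'f set" and eps_p :: "nat \<Rightarrow> 'g \<Rightarrow> 'g \<Rightarrow> 'f set"
  assumes "group G" and "finite (carrier G)"
    and "fitting G \<noteq> {\<one>\<^bsub>G\<^esub>}"
    and "free_on F f n"
    and "mu \<in> hom F G" and "mu ` carrier F = carrier G"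
    and "defines_extension F G mu eps"
    and "\<forall>p \<in> F_primes G. \<forall>g \<in> carrier G. \<forall>h \<in> carrier G. eps_p p g h \<in> Msyl F G mu p"
    and "\<forall>g \<in> carrier G. \<forall>h \<in> carrier G.
           eps g h = finprod (Mgrp F G mu) (\<lambda>p. eps_p p g h) (F_primes G)"
  shows "etaM_W F G mu =
           {a \<in> Aut (Mgrp F G mu). \<forall>p \<in> F_primes G. \<exists>b \<in> Wp F G mu p.
              \<forall>m \<in> Msyl F G mu p. a m = b m}
       \<and> (\<forall>p \<in> F_primes G.
           (\<lambda>b. restrict b (Msyl F G mu p)) ` Wp F G mu p =
           {c \<in> Cp F G mu p. cohomologous F G mu p (\<lambda>g h. c (eps_p p g h)) (eps_p p)})"
proof -
  interpret Gstar_setting F G mu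
    using assms(1,2,4,5,6) unfolding Gstar_setting_def Gstar_setting_axioms_def free_on_def by blast
  obtain s where s: "\<forall>g \<in> carrier G. \<exists>w \<in> carrier F. mu w = g \<and> s g = Nsub F G mu #>\<^bsub>F\<^esub> w"
    and eps: "\<forall>g \<in> carrier G. \<forall>h \<in> carrier G.
      eps g h = s g \<otimes>\<^bsub>Gstar F G mu\<^esub> s h \<otimes>\<^bsub>Gstar F G mu\<^esub> inv\<^bsub>Gstar F G mu\<^esub> (s (g \<otimes>\<^bsub>G\<^esub> h))"
    using assms(7) unfolding defines_extension_def by blast
  interpret abelian_extension_cocycle "Gstar F G mu" "Mset F G mu" "F_primes G" G mu_bar lift s eps
    using s eps by unfold_locales (auto simp: Gstar_carrier mu_bar_coset)
  have eps_p: "eps_p p g h = primary_proj p (eps g h)"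
    if "p \<in> F_primes G" "g \<in> carrier G" "h \<in> carrier G" for p g h
    using primary_proj_finprod[OF that(1), of "\<lambda>q. eps_p q g h"] assms(8,9) that
    unfolding Msyl_eq Mgrp_def by simp
  have "{c \<in> Cp F G mu p. cohomologous F G mu p (\<lambda>g h. c (eps_p p g h)) (eps_p p)} = stab p"
    if "p \<in> F_primes G" for p
  proof -
    have "cohomologous F G mu p (\<lambda>g h. c (eps_p p g h)) (eps_p p) \<longleftrightarrow>
        cohomologous_at p (\<lambda>g h. c (primary_proj p (eps g h))) (\<lambda>g h. primary_proj p (eps g h))" for c
      by (rule cohomologous_eq) (simp add: eps_p[OF that])
    then show ?thesis
      unfolding stab_def Cp_eq by simp
  qed
  then show ?thesis
    using WM_eq_components W_at_restrict_eq_stab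
    unfolding etaM_W_eq Wp_eq Msyl_eq Mgrp_def by simp
qed

end
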